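(* Let $M$ be a stable matching of the induced continuum market $\widehat\Gamma$, and let $B$ and $B^{*f}$ ($f\in\widetilde F$) be the matrices constructed from $M$ as below, with $N=\sum_{f\in\widetilde F}cl(f)$. If the firms' demand type $\mathcal D$ is totally unimodular, then there exists $\mathbf z=(\mathbf z^{f_1},\dots,\mathbf z^{f_m},\mathbf z^{\o})\in\{0,1\}^N$, with $\mathbf z^f\in\{0,1\}^{cl(f)}$, such that $B\mathbf z=\mathbf 1$ (the all-ones vector in $\mathbb R^{m+n}$), and the pseudo-matching $M'$ given by $M'_f=\sum_{j=1}^{cl(f)}z^f_jB^{*f}_j$ for each $f\in\widetilde F$ is a stable integral matching in $\widehat\Gamma$, where $B^{*f}_j$ denotes the $j$-th column of $B^{*f}$.
   Context: Finite firms $F=\{f_1,\dots,f_m\}$, finite workers $W=\{w_1,\dots,w_n\}$, null firm $\o$, $\widetilde F=F\cup\{\o\}$; each worker $w$ has a strict complete transitive preference $\succ_w$ over $\widetilde F$ ($f\succeq_w f'$ means $f\succ_w f'$ or $f=f'$); each firm $f\in F$ has a strict complete transitive preference $\succ_f$ over $2^W$, subsets identified with indicator vectors; $Ch_f(S)$ is the $\succ_f$-best subset of $S$. Demand type: $\mathcal D_f=\{\mathbf d\in\{-1,0,1\}^W:\mathbf d\ne\mathbf 0,\ \mathbf d=ind(Ch_f(S))-ind(Ch_f(S'))$ for some $S'\subsetneq S\subseteq W\}$, $\mathcal D=\bigcup_{f\in F}\mathcal D_f$; a set of vectors is totally unimodular if the matrix with them as columns has all square subdeterminants in $\{0,\pm1\}$.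 Continuum market $\widehat\Gamma$: for $f\in F$ list the sets $S\succ_f\emptyset$ as $\mathbf u^1\succ_f\cdots\succ_f\mathbf u^L$; for $\mathbf x\in[0,1]^W$: $t_0=0$, $\mathbf z^0=\mathbf x$, $t_k=\min\{1-\sum_{j<k}t_j,\ z^{k-1}_i:u^k_i\ne0\}$, $\mathbf z^k=\mathbf z^{k-1}-t_k\mathbf u^k$, $\widehat{Ch}_f(\mathbf x)=\sum_k t_k\mathbf u^k$; $\widehat{Ch}_{\o}(\mathbf x)=\mathbf x$. A pseudo-matching is $M=(M_f)_{f\in\widetilde F}$, $M_f\in[0,1]^W$; it is a matching if $\sum_{f\in\widetilde F}M_f(w)=1$ for all $w$, and integral if all entries are in $\{0,1\}$. $M''\succ_f M_f$ means $M''=\widehat{Ch}_f(M''\vee M_f)$ and $M''\ne M_f$ ($\vee$ componentwise max). $A^{\preceq f}(M)(w)=\sum_{f'\in\widetilde F:f\succeq_w f'}M_{f'}(w)$. $M$ is stable if (i) $M_f=\widehat{Ch}_f(M_f)$ for all $f\in F$ and $M_f(w)=0$ whenever $\o\succ_w f$; (ii) no $f\in F$, $M''\in[0,1]^W$ with $M''\succ_f M_f$ and $M''\le A^{\preceq f}(M)$. Construction: for $f\in F$, with $t_1,\dots,t_L$ from the procedure computing $\widehat{Ch}_f(M_f)$, let $k_1<\dots<k_s$ be the indices with $t_{k_l}>0$; $B^{*f}=[\mathbf u^{k_1},\dots,\mathbf u^{k_s}]$ if $\sum_{j=1}^Lt_j=1$, and $B^{*f}=[\mathbf u^{k_1},\dots,\mathbf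 u^{k_s},\mathbf 0]$ if $\sum_{j=1}^Lt_j<1$ (an $n\times cl(f)$ matrix). For $f=f_i$, $B^f$ is the $(m+n)\times cl(f)$ matrix whose every column has the $i$-th unit vector of $\mathbb R^m$ as its first $m$ entries and the corresponding column of $B^{*f}$ as its last $n$ entries. $B^{\o}$ has as columns the unit vectors $e_{m+j}\in\mathbb R^{m+n}$ for each $j$ with $M_{\o}(w_j)>0$ (in increasing $j$), $cl(\o)$ being their number, and $B^{*\o}$ consists of the last $n$ rows of $B^{\o}$. Finally $B=[B^{f_1},\dots,B^{f_m},B^{\o}]$. *)

theory Defs
  imports Main "Jordan_Normal_Form.Determinant"
begin

(* Firms: type 'f (finite); null firm \<o> = None, real firm f = Some f.
   Workers: type 'w (finite, linearly ordered = the enumeration w_1,...,w_n). *)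

definition strict_total :: "('a \<Rightarrow> 'a \<Rightarrow> bool) \<Rightarrow> bool" where
  "strict_total P \<longleftrightarrow> (\<forall>x. \<not> P x x) \<and> (\<forall>x y z. P x y \<longrightarrow> P y z \<longrightarrow> P x z)
     \<and> (\<forall>x y. x \<noteq> y \<longrightarrow> P x y \<or> P y x)"

definition ind :: "'w set \<Rightarrow> 'w \<Rightarrow> real" where
  "ind S = (\<lambda>w. if w \<in> S then 1 else 0)"

definition indI :: "'w set \<Rightarrow> 'w \<Rightarrow> int" where
  "indI S = (\<lambda>w. if w \<in> S then 1 else 0)"

definition Ch :: "('w set \<Rightarrow> 'w set \<Rightarrow> bool) \<Rightarrow> 'w set \<Rightarrow> 'w set" where
  "Ch P S = (THE T. T \<subseteq> S \<and> (\<forall>T'. T' \<subseteq> S \<and> T' \<noteq> T \<longrightarrow> P T T'))"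

definition demand_type :: "('w set \<Rightarrow> 'w set \<Rightarrow> bool) \<Rightarrow> ('w \<Rightarrow> int) set" where
  "demand_type P = {d. (\<forall>w. d w \<in> {-1, 0, 1}) \<and> d \<noteq> (\<lambda>_. 0) \<and>
     (\<exists>S S'. S' \<subset> S \<and> d = (\<lambda>w. indI (Ch P S) w - indI (Ch P S') w))}"

definition totally_unimodular :: "('w \<Rightarrow> int) set \<Rightarrow> bool" where
  "totally_unimodular V \<longleftrightarrow>
     (\<forall>k (rs :: 'w list) (cs :: ('w \<Rightarrow> int) list).
        distinct rs \<and> length rs = k \<and> distinct cs \<and> length cs = k \<and> set cs \<subseteq> V \<longrightarrow>
        det (mat k k (\<lambda>(i, j). (cs ! j) (rs ! i))) \<in> {-1, 0, 1})"

definition acc_list :: "('w set \<Rightarrow> 'w set \<Rightarrow> bool) \<Rightarrow> 'w set list" where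
  "acc_list P = (SOME us. sorted_wrt P us \<and> set us = {S. P S {}})"

(* the t_k of the procedure; s = sum of previous t_j, z = current residual *)
fun ch_ts :: "'w set list \<Rightarrow> ('w \<Rightarrow> real) \<Rightarrow> real \<Rightarrow> real list" where
  "ch_ts [] z s = []"
| "ch_ts (u # us) z s =
     (let t = Min (insert (1 - s) (z ` u))
      in t # ch_ts us (\<lambda>i. z i - t * ind u i) (s + t))"

definition ts_of :: "('w set \<Rightarrow> 'w set \<Rightarrow> bool) \<Rightarrow> ('w \<Rightarrow> real) \<Rightarrow> real list" where
  "ts_of P x = ch_ts (acc_list P) x 0"

definition chhat :: "('w set \<Rightarrow> 'w set \<Rightarrow> bool) \<Rightarrow> ('w \<Rightarrow> real) \<Rightarrow> 'w \<Rightarrow> real" where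
  "chhat P x = (\<lambda>w. \<Sum>k<length (acc_list P). ts_of P x ! k * ind (acc_list P ! k) w)"

definition is_pseudo :: "('f option \<Rightarrow> 'w \<Rightarrow> real) \<Rightarrow> bool" where
  "is_pseudo M \<longleftrightarrow> (\<forall>f w. 0 \<le> M f w \<and> M f w \<le> 1)"

definition is_matching :: "('f::finite option \<Rightarrow> 'w \<Rightarrow> real) \<Rightarrow> bool" where
  "is_matching M \<longleftrightarrow> is_pseudo M \<and> (\<forall>w. (\<Sum>f\<in>UNIV. M f w) = 1)"

definition integral :: "('f option \<Rightarrow> 'w \<Rightarrow> real) \<Rightarrow> bool" where
  "integral M \<longleftrightarrow> (\<forall>f w. M f w \<in> {0, 1})"

definition firm_prefers :: "('w set \<Rightarrow> 'w set \<Rightarrow> bool) \<Rightarrow> ('w \<Rightarrow> real) \<Rightarrow> ('w \<Rightarrow> real) \<Rightarrow> bool" where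
  "firm_prefers P M'' Mf \<longleftrightarrow> M'' = chhat P (\<lambda>w. max (M'' w) (Mf w)) \<and> M'' \<noteq> Mf"

definition A_le :: "('w \<Rightarrow> 'f::finite option \<Rightarrow> 'f option \<Rightarrow> bool) \<Rightarrow> ('f option \<Rightarrow> 'w \<Rightarrow> real)
     \<Rightarrow> 'f \<Rightarrow> 'w \<Rightarrow> real" where
  "A_le PW M f w = (\<Sum>f'\<in>{f'. PW w (Some f) f' \<or> f' = Some f}. M f' w)"

definition stable :: "('w \<Rightarrow> 'f::finite option \<Rightarrow> 'f option \<Rightarrow> bool) \<Rightarrow> ('f \<Rightarrow> 'w set \<Rightarrow> 'w set \<Rightarrow> bool)
     \<Rightarrow> ('f option \<Rightarrow> 'w \<Rightarrow> real) \<Rightarrow> bool" where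
  "stable PW PF M \<longleftrightarrow>
     (\<forall>f. M (Some f) = chhat (PF f) (M (Some f)) \<and> (\<forall>w. PW w None (Some f) \<longrightarrow> M (Some f) w = 0)) \<and>
     \<not> (\<exists>f M''. (\<forall>w. 0 \<le> M'' w \<and> M'' w \<le> 1) \<and> firm_prefers (PF f) M'' (M (Some f)) \<and>
            (\<forall>w. M'' w \<le> A_le PW M f w))"

definition Bstar :: "('f \<Rightarrow> 'w::linorder set \<Rightarrow> 'w set \<Rightarrow> bool) \<Rightarrow> ('f option \<Rightarrow> 'w \<Rightarrow> real)
     \<Rightarrow> 'f option \<Rightarrow> ('w \<Rightarrow> real) list" where
  "Bstar PF M fo = (case fo of
      None \<Rightarrow> map (\<lambda>w. ind {w}) (sorted_list_of_set {w. 0 < M None w})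
    | Some f \<Rightarrow> (let us = acc_list (PF f); ts = ts_of (PF f) (M (Some f)) in
        map (\<lambda>k. ind (us ! k)) (filter (\<lambda>k. 0 < ts ! k) [0..<length us])
        @ (if sum_list ts = 1 then [] else [(\<lambda>_. 0)])))"

(* column of B^f from a column of B^{*f}; rows indexed by F + W *)
definition Bcol :: "'f option \<Rightarrow> ('w \<Rightarrow> real) \<Rightarrow> 'f + 'w \<Rightarrow> real" where
  "Bcol fo c = (\<lambda>r. case r of Inl g \<Rightarrow> (if Some g = fo then 1 else 0) | Inr w \<Rightarrow> c w)"

end

theory Submission
  imports Defs
begin

text \<open>The stable fractional matching M is a nonnegative solution of \<open>B x = 1\<close>. Every used
  set of a firm (one with \<open>t\<^sub>k > 0\<close>) is what \<open>Ch\<close> picks from it together with the later used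
  sets, so the used sets and their pairwise differences are, up to sign, vectors of the demand
  type; stacking such columns under firm-indicator rows keeps the matrix totally unimodular.
  Hence the support of x carries a 0/1 solution z: on a nonsingular minor Cramer's rule makes x
  integral, otherwise x can be moved along a kernel vector until its support shrinks.

  The matching \<open>M'\<close> given by z assigns each firm one of its used sets or nothing. It is stable
  because a firm cannot block exactly when it chooses its assignment from its availability
  vector, and under \<open>M'\<close> no acceptable set preferred to the selected one is available: such a
  set was exhausted by the fractional procedure on the availability vector under M.\<close>

lemma strict_totalD:
  assumes "strict_total P"
  shows "\<not> P x x" "P x y \<Longrightarrow> P y z \<Longrightarrow> P x z" "x \<noteq> y \<Longrightarrow> P x y \<or> P y x"
  using assms unfolding strict_total_def by blast+

lemma strict_total_sorted_list_exists:
  assumes "strict_total P" and "finite A"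
  shows "\<exists>xs. sorted_wrt P xs \<and> set xs = A"
  using assms(2)
proof (induction A rule: finite_induct)
  case empty
  show ?case by auto
next
  case (insert a A)
  then obtain xs where xs: "sorted_wrt P xs" "set xs = A" by auto
  let ?ys = "filter (\<lambda>y. P y a) xs @ a # filter (P a) xs"
  have "sorted_wrt P ?ys"
    using xs strict_totalD[OF assms(1)] by (auto simp: sorted_wrt_append sorted_wrt_filter)
  moreover have "set ?ys = insert a A"
    using xs insert.hyps strict_totalD(3)[OF assms(1)] by auto
  ultimately show ?case by blast
qed

context
  fixes P :: "'w::finite set \<Rightarrow> 'w set \<Rightarrow> bool"
  assumes st: "strict_total P"
begin

lemma acc_list_spec: "sorted_wrt P (acc_list P) \<and> set (acc_list P) = {S. P S {}}"
  unfolding acc_list_def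
  by (rule someI_ex, rule strict_total_sorted_list_exists[OF st]) simp

lemma acc_list_acceptable: "k < length (acc_list P) \<Longrightarrow> P (acc_list P ! k) {}"
  using acc_list_spec nth_mem by blast

lemma acc_list_nonempty: "k < length (acc_list P) \<Longrightarrow> acc_list P ! k \<noteq> {}"
  using acc_list_acceptable strict_totalD(1)[OF st] by fastforce

lemma acc_list_complete: "P S {} \<Longrightarrow> \<exists>k < length (acc_list P). acc_list P ! k = S"
  using acc_list_spec by (auto simp: in_set_conv_nth)

lemma acc_list_less_if_preferred:
  assumes j: "j < length (acc_list P)" and k: "k < length (acc_list P)"
    and pref: "P (acc_list P ! j) (acc_list P ! k)"
  shows "j < k"
proof (rule ccontr)
  assume "\<not> j < k"
  then consider "k < j" | "k = j" by linarith
  then show False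
  proof cases
    case 1
    then have "P (acc_list P ! k) (acc_list P ! j)"
      using acc_list_spec j by (simp add: sorted_wrt_iff_nth_less)
    then show False using pref strict_totalD[OF st] by blast
  next
    case 2
    then show False using pref strict_totalD(1)[OF st] by simp
  qed
qed

lemma distinct_acc_list: "distinct (acc_list P)"
  using acc_list_spec strict_totalD(1)[OF st]
  by (metis distinct_conv_nth nat_neq_iff sorted_wrt_nth_less)

end

section \<open>The fractional choice procedure\<close>

lemma length_ch_ts [simp]: "length (ch_ts us z s) = length us"
  by (induction us arbitrary: z s) (auto simp: Let_def)

lemma nth_ch_ts:
  "k < length us \<Longrightarrow> ch_ts us z s ! k =
     Min (insert (1 - (s + (\<Sum>j<k. ch_ts us z s ! j)))
       ((\<lambda>i. z i - (\<Sum>j<k. ch_ts us z s ! j * ind (us ! j) i)) ` (us ! k)))"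
proof (induction us arbitrary: z s k)
  case Nil
  then show ?case by simp
next
  case (Cons u us)
  show ?case
  proof (cases k)
    case 0
    then show ?thesis by (simp add: Let_def)
  next
    case (Suc k')
    define t where "t = Min (insert (1 - s) (z ` u))"
    have cons_step: "ch_ts (u # us) z s = t # ch_ts us (\<lambda>i. z i - t * ind u i) (s + t)"
      by (simp add: t_def Let_def)
    have "k' < length us" using Cons.prems Suc by simp
    from Cons.IH[OF this, of "\<lambda>i. z i - t * ind u i" "s + t"] show ?thesis
      unfolding cons_step Suc
      by (simp del: sum.lessThan_Suc add: sum.lessThan_Suc_shift algebra_simps)
  qed
qed

text \<open>\<open>ch_mass P x k\<close> and \<open>ch_residual P x k\<close> are the paper's \<open>t\<^sub>1 + \<dots> + t\<^sub>k\<close> and \<open>z\<^sup>k\<close>;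
  lists are 0-based, so \<open>ts_of P x ! j\<close> is \<open>t\<^sub>j\<^sub>+\<^sub>1\<close>.\<close>

definition ch_mass :: "('w set \<Rightarrow> 'w set \<Rightarrow> bool) \<Rightarrow> ('w \<Rightarrow> real) \<Rightarrow> nat \<Rightarrow> real" where
  "ch_mass P x k = (\<Sum>j<k. ts_of P x ! j)"

definition ch_residual :: "('w set \<Rightarrow> 'w set \<Rightarrow> bool) \<Rightarrow> ('w \<Rightarrow> real) \<Rightarrow> nat \<Rightarrow> 'w \<Rightarrow> real" where
  "ch_residual P x k i = x i - (\<Sum>j<k. ts_of P x ! j * ind (acc_list P ! j) i)"

lemma length_ts_of [simp]: "length (ts_of P x) = length (acc_list P)"
  by (simp add: ts_of_def)

lemma nth_ts_of:
  "k < length (acc_list P) \<Longrightarrow>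
     ts_of P x ! k = Min (insert (1 - ch_mass P x k) (ch_residual P x k ` (acc_list P ! k)))"
  unfolding ch_mass_def ch_residual_def ts_of_def by (subst nth_ch_ts) auto

lemma ch_mass_Suc: "ch_mass P x (Suc k) = ch_mass P x k + ts_of P x ! k"
  by (simp add: ch_mass_def)

lemma ch_residual_Suc:
  "ch_residual P x (Suc k) i = ch_residual P x k i - ts_of P x ! k * ind (acc_list P ! k) i"
  by (simp add: ch_residual_def algebra_simps)

lemma sum_list_ts_of: "sum_list (ts_of P x) = ch_mass P x (length (acc_list P))"
  by (simp add: ch_mass_def sum_list_sum_nth atLeast0LessThan)

lemma chhat_eq_ch_residual: "chhat P x w = x w - ch_residual P x (length (acc_list P)) w"
  unfolding chhat_def ch_residual_def by simp

lemma ts_of_le: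
  assumes "k < length (acc_list (P :: 'w::finite set \<Rightarrow> 'w set \<Rightarrow> bool))"
  shows "ts_of P x ! k \<le> 1 - ch_mass P x k"
    and "i \<in> acc_list P ! k \<Longrightarrow> ts_of P x ! k \<le> ch_residual P x k i"
  unfolding nth_ts_of[OF assms] by (rule Min_le; auto)+

lemma ts_of_cases:
  assumes "k < length (acc_list (P :: 'w::finite set \<Rightarrow> 'w set \<Rightarrow> bool))"
  obtains "ts_of P x ! k = 1 - ch_mass P x k"
    | i where "i \<in> acc_list P ! k" "ts_of P x ! k = ch_residual P x k i"
proof -
  have "Min (insert (1 - ch_mass P x k) (ch_residual P x k ` (acc_list P ! k)))
          \<in> insert (1 - ch_mass P x k) (ch_residual P x k ` (acc_list P ! k))"
    by (rule Min_in) auto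
  then show ?thesis using that nth_ts_of[OF assms] by auto
qed

context
  fixes P :: "'w::finite set \<Rightarrow> 'w set \<Rightarrow> bool" and x :: "'w \<Rightarrow> real"
  assumes x_nonneg: "\<forall>i. 0 \<le> x i"
begin

lemma ch_mass_le_1_and_residual_nonneg:
  "k \<le> length (acc_list P) \<Longrightarrow> ch_mass P x k \<le> 1 \<and> (\<forall>i. 0 \<le> ch_residual P x k i)"
proof (induction k)
  case 0
  then show ?case using x_nonneg by (simp add: ch_mass_def ch_residual_def)
next
  case (Suc k)
  then show ?case
    using ts_of_le[where P=P and x=x and k=k] by (auto simp: ch_mass_Suc ch_residual_Suc ind_def)
qed

lemma ch_mass_le_1: "k \<le> length (acc_list P) \<Longrightarrow> ch_mass P x k \<le> 1"
  using ch_mass_le_1_and_residual_nonneg by blast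

lemma ch_residual_nonneg: "k \<le> length (acc_list P) \<Longrightarrow> 0 \<le> ch_residual P x k i"
  using ch_mass_le_1_and_residual_nonneg by blast

lemma ts_of_nonneg: "k < length (acc_list P) \<Longrightarrow> 0 \<le> ts_of P x ! k"
  unfolding nth_ts_of
  using ch_mass_le_1[of k] ch_residual_nonneg[of k] by (subst Min_ge_iff) auto

lemma sum_list_ts_of_le_1: "sum_list (ts_of P x) \<le> 1"
  using ch_mass_le_1[of "length (acc_list P)"] sum_list_ts_of[of P x] by simp

lemma ch_mass_mono: "k \<le> k' \<Longrightarrow> k' \<le> length (acc_list P) \<Longrightarrow> ch_mass P x k \<le> ch_mass P x k'"
  unfolding ch_mass_def by (rule sum_mono2) (auto intro: ts_of_nonneg)

lemma ch_residual_antimono: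
  assumes "k \<le> k'" "k' \<le> length (acc_list P)"
  shows "ch_residual P x k' i \<le> ch_residual P x k i"
proof -
  have "(\<Sum>j<k. ts_of P x ! j * ind (acc_list P ! j) i)
          \<le> (\<Sum>j<k'. ts_of P x ! j * ind (acc_list P ! j) i)"
    by (rule sum_mono2) (use assms in \<open>auto intro!: mult_nonneg_nonneg ts_of_nonneg simp: ind_def\<close>)
  then show ?thesis unfolding ch_residual_def by simp
qed

lemma chhat_nonneg: "0 \<le> chhat P x w"
  unfolding chhat_def by (auto intro!: sum_nonneg mult_nonneg_nonneg ts_of_nonneg simp: ind_def)

lemma chhat_le: "chhat P x w \<le> x w"
  using chhat_eq_ch_residual[of P x w] ch_residual_nonneg[of "length (acc_list P)" w] by simp

lemma chhat_le_1: "chhat P x w \<le> 1"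
proof -
  have "chhat P x w \<le> (\<Sum>k<length (acc_list P). ts_of P x ! k)"
    unfolding chhat_def by (rule sum_mono) (auto simp: ind_def intro: ts_of_nonneg)
  also have "\<dots> \<le> 1" using ch_mass_le_1[of "length (acc_list P)"] by (simp add: ch_mass_def)
  finally show ?thesis .
qed

lemma ch_residual_pos:
  "k < length (acc_list P) \<Longrightarrow> 0 < ts_of P x ! k \<Longrightarrow> i \<in> acc_list P ! k \<Longrightarrow> 0 < ch_residual P x k i"
  using ts_of_le(2)[of k P i x] by simp

lemma pos_if_in_used_set:
  assumes "k < length (acc_list P)" "0 < ts_of P x ! k" "i \<in> acc_list P ! k"
  shows "0 < x i"
  using ch_residual_pos[OF assms] ch_residual_antimono[of 0 k i] assms(1)
  by (simp add: ch_residual_def)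

lemma ch_mass_lt_1_before_used:
  assumes "c < length (acc_list P)" "0 < ts_of P x ! c" "k \<le> c"
  shows "ch_mass P x k < 1"
  using ch_mass_mono[of k c] ch_mass_le_1[of "Suc c"] assms by (simp add: ch_mass_Suc)

lemma ts_of_le_residual_decrease:
  assumes "k < length (acc_list P)" "i \<in> acc_list P ! k"
  shows "ts_of P x ! k \<le> ch_residual P x k i - ch_residual P x (length (acc_list P)) i"
  using ch_residual_antimono[of "Suc k" "length (acc_list P)" i] assms
  by (simp add: ch_residual_Suc ind_def)

end

lemma ch_residual_vanishes:
  assumes "k < length (acc_list (P :: 'w::finite set \<Rightarrow> 'w set \<Rightarrow> bool))"
    and "ch_mass P x (Suc k) < 1"
  shows "\<exists>i\<in>acc_list P ! k. ch_residual P x (Suc k) i = 0"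
  using assms(1)
proof (cases rule: ts_of_cases[where x = x])
  case 1
  then show ?thesis using assms(2) by (simp add: ch_mass_Suc)
next
  case (2 i)
  then show ?thesis by (auto simp: ch_residual_Suc ind_def)
qed

section \<open>Used sets and the demand type\<close>

lemma Ch_empty: "Ch P {} = {}"
  unfolding Ch_def by (rule the_equality) auto

lemma Ch_eqI:
  assumes "strict_total P" "T \<subseteq> S" "\<forall>T'. T' \<subseteq> S \<and> T' \<noteq> T \<longrightarrow> P T T'"
  shows "Ch P S = T"
  unfolding Ch_def
proof (rule the_equality)
  fix T'' assume T'': "T'' \<subseteq> S \<and> (\<forall>T'. T' \<subseteq> S \<and> T' \<noteq> T'' \<longrightarrow> P T'' T')"
  show "T'' = T"
  proof (rule ccontr)
    assume "T'' \<noteq> T"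
    then have "P T'' T" "P T T''" using T'' assms(2,3) by blast+
    then show False using strict_totalD[OF assms(1)] by blast
  qed
qed (use assms(2,3) in blast)

lemma indI_Ch_diff_in_demand_type:
  assumes "S' \<subset> S" "Ch P S \<noteq> Ch P S'"
  shows "(\<lambda>w. indI (Ch P S) w - indI (Ch P S') w) \<in> demand_type P"
proof -
  have "(\<lambda>w. indI (Ch P S) w - indI (Ch P S') w) \<noteq> (\<lambda>_. 0)"
    using assms(2) by (auto simp: indI_def fun_eq_iff split: if_splits)
  then show ?thesis using assms(1) unfolding demand_type_def by (auto simp: indI_def)
qed

text \<open>The sets used by the procedure (those with \<open>t\<^sub>k > 0\<close>) are chosen by \<open>Ch\<close>:
  an acceptable set preferred to a used one is never covered by later used sets.\<close>

context
  fixes P :: "'w::finite set \<Rightarrow> 'w set \<Rightarrow> bool" and x :: "'w \<Rightarrow> real"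
  assumes st: "strict_total P" and x_nonneg: "\<forall>i. 0 \<le> x i"
begin

lemma not_covered_by_later_used_sets:
  assumes j: "j < length (acc_list P)"
  shows "\<not> (\<forall>i\<in>acc_list P ! j. \<exists>c. j < c \<and> c < length (acc_list P) \<and> 0 < ts_of P x ! c \<and> i \<in> acc_list P ! c)"
proof
  assume cov: "\<forall>i\<in>acc_list P ! j. \<exists>c. j < c \<and> c < length (acc_list P) \<and> 0 < ts_of P x ! c \<and> i \<in> acc_list P ! c"
  obtain i0 where "i0 \<in> acc_list P ! j" using acc_list_nonempty[OF st j] by auto
  then obtain c0 where c0: "j < c0" "c0 < length (acc_list P)" "0 < ts_of P x ! c0" using cov by blast
  have "ch_mass P x (Suc j) < 1"
    using ch_mass_lt_1_before_used[OF x_nonneg c0(2,3)] c0(1) by simp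
  then obtain i where i: "i \<in> acc_list P ! j" "ch_residual P x (Suc j) i = 0"
    using ch_residual_vanishes[OF j] by blast
  then obtain c where c: "j < c" "c < length (acc_list P)" "0 < ts_of P x ! c" "i \<in> acc_list P ! c"
    using cov by blast
  have "0 < ch_residual P x c i" using ch_residual_pos[OF x_nonneg c(2-4)] .
  moreover have "ch_residual P x c i \<le> ch_residual P x (Suc j) i"
    using ch_residual_antimono[OF x_nonneg] c by simp
  ultimately show False using i by simp
qed

lemma Ch_eq_used_set:
  assumes a: "a < length (acc_list P)" "0 < ts_of P x ! a" and sub: "acc_list P ! a \<subseteq> S"
    and cov: "\<forall>i\<in>S. \<exists>c. a \<le> c \<and> c < length (acc_list P) \<and> 0 < ts_of P x ! c \<and> i \<in> acc_list P ! c"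
  shows "Ch P S = acc_list P ! a"
proof (rule Ch_eqI[OF st sub], intro allI impI)
  fix T' assume T': "T' \<subseteq> S \<and> T' \<noteq> acc_list P ! a"
  show "P (acc_list P ! a) T'"
  proof (rule ccontr)
    assume "\<not> P (acc_list P ! a) T'"
    then have pref: "P T' (acc_list P ! a)" using strict_totalD(3)[OF st] T' by blast
    then have "P T' {}" using strict_totalD(2)[OF st] acc_list_acceptable[OF st a(1)] by blast
    then obtain j where j: "j < length (acc_list P)" "acc_list P ! j = T'"
      using acc_list_complete[OF st] by blast
    have "j < a" using acc_list_less_if_preferred[OF st j(1) a(1)] pref j(2) by simp
    then show False
      using not_covered_by_later_used_sets[OF j(1)] cov T' j(2) by fastforce
  qed
qed

lemma indI_used_set_in_demand_type:
  assumes "a < length (acc_list P)" "0 < ts_of P x ! a"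
  shows "indI (acc_list P ! a) \<in> demand_type P"
proof -
  have ne: "{} \<subset> acc_list P ! a" using acc_list_nonempty[OF st assms(1)] by auto
  have "Ch P (acc_list P ! a) = acc_list P ! a"
    by (rule Ch_eq_used_set[OF assms]) (use assms in auto)
  then show ?thesis
    using indI_Ch_diff_in_demand_type[OF ne, of P] ne by (simp add: Ch_empty indI_def)
qed

lemma indI_diff_used_sets_in_demand_type:
  assumes ab: "a < b" and b: "b < length (acc_list P)"
    and ta: "0 < ts_of P x ! a" and tb: "0 < ts_of P x ! b"
  shows "(\<lambda>w. indI (acc_list P ! a) w - indI (acc_list P ! b) w) \<in> demand_type P"
proof -
  have a: "a < length (acc_list P)" using ab b by simp
  have "\<not> acc_list P ! a \<subseteq> acc_list P ! b"
    using not_covered_by_later_used_sets[OF a] ab b tb by blast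
  then have sub: "acc_list P ! b \<subset> acc_list P ! a \<union> acc_list P ! b" by auto
  have "Ch P (acc_list P ! a \<union> acc_list P ! b) = acc_list P ! a"
    by (rule Ch_eq_used_set[OF a ta]) (use a ta ab b tb in \<open>auto intro: less_imp_le\<close>)
  moreover have "Ch P (acc_list P ! b) = acc_list P ! b"
    by (rule Ch_eq_used_set[OF b tb]) (use b tb in auto)
  moreover have "acc_list P ! a \<noteq> acc_list P ! b"
    using distinct_acc_list[OF st] a b ab by (simp add: nth_eq_iff_index_eq)
  ultimately show ?thesis using indI_Ch_diff_in_demand_type[OF sub, of P] by simp
qed

end

section \<open>Irrelevance of rejected contracts\<close>

lemma ch_residual_eq_if_prefix_eq:
  assumes "\<forall>j<k. ts_of P y ! j = ts_of P x ! j"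
  shows "ch_mass P y k = ch_mass P x k"
    and "ch_residual P y k i = ch_residual P x k i + (y i - x i)"
  using assms unfolding ch_mass_def ch_residual_def by (auto intro!: sum.cong)

theorem ts_of_eq_if_between:
  fixes P :: "'w::finite set \<Rightarrow> 'w set \<Rightarrow> bool"
  assumes x_nonneg: "\<forall>i. 0 \<le> x i"
    and lo: "\<forall>w. chhat P x w \<le> y w" and hi: "\<forall>w. y w \<le> x w"
  shows "ts_of P y = ts_of P x"
proof (rule nth_equalityI)
  let ?L = "length (acc_list P)"
  have "ts_of P y ! k = ts_of P x ! k" if "k < ?L" for k
    using that
  proof (induction k rule: less_induct)
    case (less k)
    let ?t = "ts_of P x ! k"
    let ?E = "insert (1 - ch_mass P y k) (ch_residual P y k ` (acc_list P ! k))"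
    have mass: "ch_mass P y k = ch_mass P x k"
      and res: "\<And>i. ch_residual P y k i = ch_residual P x k i + (y i - x i)"
      using ch_residual_eq_if_prefix_eq[of k P y x] less by auto
    have lower: "?t \<le> ch_residual P y k i" if "i \<in> acc_list P ! k" for i
      using ts_of_le_residual_decrease[OF x_nonneg less.prems that]
        chhat_eq_ch_residual[of P x i] lo[rule_format, of i] res[of i] by simp
    have "?t \<in> ?E"
      using less.prems
    proof (cases rule: ts_of_cases[where x = x])
      case 1
      then show ?thesis using mass by simp
    next
      case (2 i)
      then have "ch_residual P y k i = ?t"
        using lower[OF 2(1)] res[of i] hi[rule_format, of i] by linarith
      then show ?thesis using 2 by (metis image_eqI insertI2)
    qed
    moreover have "\<forall>e\<in>?E. ?t \<le> e" using ts_of_le(1)[OF less.prems] mass lower by auto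
    ultimately have "Min ?E = ?t" by (intro Min_eqI) auto
    then show ?case using nth_ts_of[OF less.prems, of y] by simp
  qed
  then show "\<And>k. k < length (ts_of P y) \<Longrightarrow> ts_of P y ! k = ts_of P x ! k" by simp
qed simp

corollary chhat_eq_if_between:
  fixes P :: "'w::finite set \<Rightarrow> 'w set \<Rightarrow> bool"
  assumes "\<forall>i. 0 \<le> x i" "\<forall>w. chhat P x w \<le> y w" "\<forall>w. y w \<le> x w"
  shows "chhat P y = chhat P x"
  unfolding chhat_def using ts_of_eq_if_between[OF assms] by simp

context
  fixes P :: "'w::finite set \<Rightarrow> 'w set \<Rightarrow> bool"
  assumes st: "strict_total P"
begin

lemma ts_of_ind:
  assumes k0: "k0 \<le> length (acc_list P)"
    and sub: "k0 < length (acc_list P) \<Longrightarrow> acc_list P ! k0 \<subseteq> T"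
    and nsub: "\<forall>j<k0. \<not> acc_list P ! j \<subseteq> T"
    and k: "k < length (acc_list P)"
  shows "ts_of P (ind T) ! k = (if k = k0 then 1 else 0)"
  using k
proof (induction k rule: less_induct)
  case (less k)
  let ?E = "insert (1 - ch_mass P (ind T) k) (ch_residual P (ind T) k ` (acc_list P ! k))"
  have "ch_mass P (ind T) k = (\<Sum>j<k. if j = k0 then 1 else 0)"
    unfolding ch_mass_def using less by (intro sum.cong) auto
  then have mass: "ch_mass P (ind T) k = (if k0 < k then 1 else 0)" by simp
  have "ch_residual P (ind T) k i = ind T i - (\<Sum>j<k. if j = k0 then ind (acc_list P ! j) i else 0)" for i
    unfolding ch_residual_def using less by (intro arg_cong2[where f = minus] sum.cong) auto
  then have res: "ch_residual P (ind T) k i = ind T i - (if k0 < k then ind (acc_list P ! k0) i else 0)" for i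
    by simp
  have ne: "acc_list P ! k \<noteq> {}" using acc_list_nonempty[OF st less.prems] .
  have "Min ?E = (if k = k0 then 1 else 0)"
  proof (rule Min_eqI)
    consider "k < k0" | "k = k0" | "k0 < k" by linarith
    then show "(if k = k0 then 1 else 0) \<in> ?E"
    proof cases
      case 1
      then obtain i where "i \<in> acc_list P ! k" "i \<notin> T" using nsub by blast
      then show ?thesis using 1 res[of i] by (force simp: ind_def)
    next
      case 2
      then obtain i where "i \<in> acc_list P ! k" using ne by blast
      then show ?thesis using 2 sub less.prems res[of i] by (force simp: ind_def)
    qed (use mass in simp)
    show "(if k = k0 then 1 else 0) \<le> e" if "e \<in> ?E" for e
      using that mass res sub less.prems by (fastforce simp: ind_def)
  qed simp
  then show ?case using nth_ts_of[OF less.prems] by simp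
qed

lemma chhat_ind_first:
  assumes "k0 < length (acc_list P)" "acc_list P ! k0 \<subseteq> T" "\<forall>j<k0. \<not> acc_list P ! j \<subseteq> T"
  shows "chhat P (ind T) = ind (acc_list P ! k0)"
proof -
  have "ts_of P (ind T) ! k * ind (acc_list P ! k) w = (if k = k0 then ind (acc_list P ! k) w else 0)"
    if "k < length (acc_list P)" for k w
    using ts_of_ind[of k0 T k] assms that by simp
  then show ?thesis unfolding chhat_def using assms(1) by (simp add: fun_eq_iff sum.delta)
qed

lemma chhat_ind_none:
  assumes "\<forall>j<length (acc_list P). \<not> acc_list P ! j \<subseteq> T"
  shows "chhat P (ind T) = (\<lambda>_. 0)"
  unfolding chhat_def using ts_of_ind[OF order.refl _ assms] by (simp add: fun_eq_iff)

end

section \<open>Totally unimodular column families\<close>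

definition remove_nth :: "nat \<Rightarrow> 'a list \<Rightarrow> 'a list" where
  "remove_nth i xs = take i xs @ drop (Suc i) xs"

lemma length_remove_nth [simp]: "i < length xs \<Longrightarrow> length (remove_nth i xs) = length xs - 1"
  by (simp add: remove_nth_def)

lemma nth_remove_nth:
  "i < length xs \<Longrightarrow> k < length xs - 1 \<Longrightarrow> remove_nth i xs ! k = xs ! (if k < i then k else Suc k)"
  by (auto simp: remove_nth_def nth_append min_def)

lemma remove_nth_length_append [simp]: "remove_nth (length xs) (xs @ [a]) = xs"
  by (simp add: remove_nth_def)

lemma set_remove_nth_subset: "set (remove_nth i xs) \<subseteq> set xs"
  by (auto simp: remove_nth_def dest: in_set_takeD in_set_dropD)

lemma distinct_remove_nth: "distinct xs \<Longrightarrow> distinct (remove_nth i xs)"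
  by (simp add: remove_nth_def set_take_disj_set_drop_if_distinct)

lemma length_filter_remove_nth:
  "i < length xs \<Longrightarrow> length (filter P xs) = length (filter P (remove_nth i xs)) + (if P (xs ! i) then 1 else 0)"
  by (subst id_take_nth_drop[of i xs]) (auto simp: remove_nth_def)

lemma length_filter_list_update:
  "i < length xs \<Longrightarrow>
     length (filter P (xs[i := y])) + (if P (xs ! i) then 1 else 0) = length (filter P xs) + (if P y then 1 else 0)"
  by (subst (2) id_take_nth_drop[of i xs]) (auto simp: upd_conv_take_nth_drop)

definition colmat :: "('c \<Rightarrow> 'r \<Rightarrow> 'a) \<Rightarrow> 'r list \<Rightarrow> 'c list \<Rightarrow> 'a mat" where
  "colmat A rs cs = mat (length rs) (length cs) (\<lambda>(i, j). A (cs ! j) (rs ! i))"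

lemma colmat_carrier [simp]: "colmat A rs cs \<in> carrier_mat (length rs) (length cs)"
  by (simp add: colmat_def)

lemma colmat_index [simp]:
  "i < length rs \<Longrightarrow> j < length cs \<Longrightarrow> colmat A rs cs $$ (i, j) = A (cs ! j) (rs ! i)"
  by (simp add: colmat_def)

lemma colmat_dim [simp]: "dim_row (colmat A rs cs) = length rs" "dim_col (colmat A rs cs) = length cs"
  by (simp_all add: colmat_def)

lemma colmat_map: "colmat A rs (map f cs) = colmat (\<lambda>c. A (f c)) rs cs"
  by (rule eq_matI) auto

lemma mat_delete_colmat:
  "i < length rs \<Longrightarrow> j < length cs \<Longrightarrow>
     mat_delete (colmat A rs cs) i j = colmat A (remove_nth i rs) (remove_nth j cs)"
  by (rule eq_matI) (auto simp: mat_delete_def nth_remove_nth)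

lemma det_colmat_repeated_col:
  assumes "j1 < length cs" "j2 < length cs" "j1 \<noteq> j2" "cs ! j1 = cs ! j2" "length rs = length cs"
  shows "det (colmat A rs cs) = 0"
  using colmat_carrier[of A rs cs] assms
  by (intro det_identical_columns[of _ "length cs" j1 j2]) (auto intro!: eq_vecI)

lemma det_colmat_repeated_row:
  assumes "i1 < length rs" "i2 < length rs" "i1 \<noteq> i2" "rs ! i1 = rs ! i2" "length rs = length cs"
  shows "det (colmat A rs cs) = 0"
  using colmat_carrier[of A rs cs] assms
  by (intro det_identical_rows[of _ "length rs" i1 i2]) (auto intro!: eq_vecI)

lemma det_zero_col:
  "(M :: 'a::comm_ring_1 mat) \<in> carrier_mat n n \<Longrightarrow> j < n \<Longrightarrow> \<forall>i<n. M $$ (i, j) = 0 \<Longrightarrow> det M = 0"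
  using laplace_expansion_column[of M n j] by simp

lemma det_zero_row:
  "(M :: 'a::comm_ring_1 mat) \<in> carrier_mat n n \<Longrightarrow> i < n \<Longrightarrow> \<forall>j<n. M $$ (i, j) = 0 \<Longrightarrow> det M = 0"
  using laplace_expansion_row[of M n i] by simp

lemma det_unit_row_in_signs:
  fixes M :: "'a::comm_ring_1 mat"
  assumes M: "M \<in> carrier_mat n n" and ij: "i < n" "j < n" and one: "M $$ (i, j) = 1"
    and zero: "\<forall>j'<n. j' \<noteq> j \<longrightarrow> M $$ (i, j') = 0"
    and minor: "det (mat_delete M i j) \<in> {-1, 0, 1}"
  shows "det M \<in> {-1, 0, 1}"
proof -
  have "det M = (\<Sum>j'<n. M $$ (i, j') * cofactor M i j')" by (rule laplace_expansion_row[OF M ij(1)])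
  also have "\<dots> = cofactor M i j"
    using ij one zero by (subst sum.remove[of _ j]) (auto intro!: sum.neutral)
  finally show ?thesis
    using minor by (cases "even (i + j)") (auto simp: cofactor_def)
qed

lemma det_unit_col_in_signs:
  fixes M :: "'a::comm_ring_1 mat"
  assumes M: "M \<in> carrier_mat n n" and ij: "i < n" "j < n" and one: "M $$ (i, j) = 1"
    and zero: "\<forall>i'<n. i' \<noteq> i \<longrightarrow> M $$ (i', j) = 0"
    and minor: "det (mat_delete M i j) \<in> {-1, 0, 1}"
  shows "det M \<in> {-1, 0, 1}"
proof -
  have "det M = (\<Sum>i'<n. M $$ (i', j) * cofactor M i' j)" by (rule laplace_expansion_column[OF M ij(2)])
  also have "\<dots> = cofactor M i j"
    using ij one zero by (subst sum.remove[of _ i]) (auto intro!: sum.neutral)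
  finally show ?thesis
    using minor by (cases "even (i + j)") (auto simp: cofactor_def)
qed

lemma det_neg_col:
  fixes M :: "'a::comm_ring_1 mat"
  assumes M: "M \<in> carrier_mat n n" and N: "N \<in> carrier_mat n n" and j: "j < n"
    and same: "\<forall>i<n. \<forall>j'<n. j' \<noteq> j \<longrightarrow> N $$ (i, j') = M $$ (i, j')"
    and neg: "\<forall>i<n. N $$ (i, j) = - M $$ (i, j)"
  shows "det N = - det M"
proof -
  have "mat_delete N i j = mat_delete M i j" if "i < n" for i
    by (rule eq_matI) (use M N same j that in \<open>auto simp: mat_delete_def\<close>)
  then have "det N = (\<Sum>i<n. - (M $$ (i, j) * cofactor M i j))"
    using laplace_expansion_column[OF N j] neg by (simp add: cofactor_def)
  also have "\<dots> = - det M" using laplace_expansion_column[OF M j] by (simp add: sum_negf)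
  finally show ?thesis .
qed

lemma det_colmat_zero_col:
  fixes A :: "'c \<Rightarrow> 'r \<Rightarrow> 'a::comm_ring_1"
  assumes "j < length cs" "length rs = length cs" "\<forall>i<length rs. A (cs ! j) (rs ! i) = 0"
  shows "det (colmat A rs cs) = 0"
  using det_zero_col[of "colmat A rs cs" "length cs" j] assms by (metis colmat_carrier colmat_index)

lemma det_colmat_zero_row:
  fixes A :: "'c \<Rightarrow> 'r \<Rightarrow> 'a::comm_ring_1"
  assumes "i < length rs" "length rs = length cs" "\<forall>j<length cs. A (cs ! j) (rs ! i) = 0"
  shows "det (colmat A rs cs) = 0"
  using det_zero_row[of "colmat A rs cs" "length cs" i] assms by (metis colmat_carrier colmat_index)

lemma det_colmat_unit_row:
  fixes A :: "'c \<Rightarrow> 'r \<Rightarrow> 'a::comm_ring_1"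
  assumes i: "i < length rs" and j: "j < length cs" and len: "length rs = length cs"
    and one: "A (cs ! j) (rs ! i) = 1" and zero: "\<forall>j'<length cs. j' \<noteq> j \<longrightarrow> A (cs ! j') (rs ! i) = 0"
    and minor: "det (colmat A (remove_nth i rs) (remove_nth j cs)) \<in> {-1, 0, 1}"
  shows "det (colmat A rs cs) \<in> {-1, 0, 1}"
proof -
  have M: "colmat A rs cs \<in> carrier_mat (length cs) (length cs)" using len by (metis colmat_carrier)
  have "mat_delete (colmat A rs cs) i j = colmat A (remove_nth i rs) (remove_nth j cs)"
    by (rule mat_delete_colmat[OF i j])
  then show ?thesis
    by (intro det_unit_row_in_signs[OF M i[unfolded len] j]) (use assms in auto)
qed

lemma det_colmat_unit_col:
  fixes A :: "'c \<Rightarrow> 'r \<Rightarrow> 'a::comm_ring_1"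
  assumes i: "i < length rs" and j: "j < length cs" and len: "length rs = length cs"
    and one: "A (cs ! j) (rs ! i) = 1" and zero: "\<forall>i'<length rs. i' \<noteq> i \<longrightarrow> A (cs ! j) (rs ! i') = 0"
    and minor: "det (colmat A (remove_nth i rs) (remove_nth j cs)) \<in> {-1, 0, 1}"
  shows "det (colmat A rs cs) \<in> {-1, 0, 1}"
proof -
  have M: "colmat A rs cs \<in> carrier_mat (length cs) (length cs)" using len by (metis colmat_carrier)
  have "mat_delete (colmat A rs cs) i j = colmat A (remove_nth i rs) (remove_nth j cs)"
    by (rule mat_delete_colmat[OF i j])
  then show ?thesis
    by (intro det_unit_col_in_signs[OF M i[unfolded len] j]) (use assms in auto)
qed

lemma det_colmat_neg_col:
  fixes A :: "'c \<Rightarrow> 'r \<Rightarrow> 'a::comm_ring_1"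
  assumes "j < length cs" "length rs = length cs" "\<forall>r. A c r = - A (cs ! j) r"
  shows "det (colmat A rs (cs[j := c])) = - det (colmat A rs cs)"
  by (rule det_neg_col[of _ "length cs"]) (use assms in \<open>auto simp: nth_list_update\<close>)

definition tu_cols :: "('c \<Rightarrow> 'r \<Rightarrow> 'a::comm_ring_1) \<Rightarrow> 'c set \<Rightarrow> bool" where
  "tu_cols A C \<longleftrightarrow> (\<forall>rs cs. distinct rs \<longrightarrow> set cs \<subseteq> C \<longrightarrow> length rs = length cs \<longrightarrow>
     det (colmat A rs cs) \<in> {-1, 0, 1})"

lemma tu_colsD:
  "tu_cols A C \<Longrightarrow> distinct rs \<Longrightarrow> set cs \<subseteq> C \<Longrightarrow> length rs = length cs \<Longrightarrow> det (colmat A rs cs) \<in> {-1, 0, 1}"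
  unfolding tu_cols_def by blast

lemma tu_colsI:
  fixes A :: "'c \<Rightarrow> 'r \<Rightarrow> 'a::comm_ring_1"
  assumes "\<And>rs cs. distinct rs \<Longrightarrow> distinct cs \<Longrightarrow> set cs \<subseteq> C \<Longrightarrow> length rs = length cs \<Longrightarrow>
      det (colmat A rs cs) \<in> {-1, 0, 1}"
  shows "tu_cols A C"
  unfolding tu_cols_def
proof (intro allI impI)
  fix rs :: "'r list" and cs :: "'c list"
  assume "distinct rs" "set cs \<subseteq> C" "length rs = length cs"
  then show "det (colmat A rs cs) \<in> {-1, 0, 1}"
    using assms det_colmat_repeated_col[of _ cs _ rs A] by (metis distinct_conv_nth insertCI)
qed

lemma tu_cols_entry:
  assumes "tu_cols A C" "c \<in> C"
  shows "A c r \<in> {-1, 0, 1}"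
proof -
  have "det (colmat A [r] [c]) \<in> {-1, 0, 1}" using tu_colsD[OF assms(1)] assms(2) by simp
  moreover have "det (colmat A [r] [c]) = A c r"
    using laplace_expansion_column[of "colmat A [r] [c]" 1 0] colmat_carrier[of A "[r]" "[c]"]
    by (simp add: cofactor_def mat_delete_def)
  ultimately show ?thesis by simp
qed

lemma tu_cols_subset: "tu_cols A C \<Longrightarrow> C' \<subseteq> C \<Longrightarrow> tu_cols A C'"
  unfolding tu_cols_def by blast

lemma tu_cols_image: "tu_cols (\<lambda>v. v) (A ` C) \<Longrightarrow> tu_cols A C"
  unfolding tu_cols_def using colmat_map[of "\<lambda>v. v" _ A] by (metis image_mono set_map length_map)

lemma totally_unimodular_imp_tu_cols:
  fixes D :: "('w \<Rightarrow> int) set"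
  assumes tu: "totally_unimodular D"
  shows "tu_cols (\<lambda>v. v) ((\<lambda>d w. real_of_int (d w)) ` D)"
proof (rule tu_colsI)
  let ?of_int = "\<lambda>(d :: 'w \<Rightarrow> int) w. real_of_int (d w)"
  fix rs :: "'w list" and cs
  assume rs: "distinct rs" and cs: "distinct cs" "set cs \<subseteq> ?of_int ` D"
    and len: "length rs = length cs"
  have "\<exists>es. set es \<subseteq> D \<and> cs = map ?of_int es"
    using cs(2)
  proof (induction cs)
    case (Cons c cs)
    then obtain es e where "set es \<subseteq> D" "cs = map ?of_int es" "e \<in> D" "c = ?of_int e" by auto
    then show ?case by (intro exI[of _ "e # es"]) simp
  qed simp
  then obtain es where es: "set es \<subseteq> D" "cs = map ?of_int es" by blast
  have "distinct es" using cs(1) es(2) by (simp add: distinct_map)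
  then have "det (mat (length rs) (length rs) (\<lambda>(i, j). (es ! j) (rs ! i))) \<in> {-1, 0, 1}"
    using tu[unfolded totally_unimodular_def, rule_format, where rs = rs and cs = es] rs es len by simp
  moreover have "colmat (\<lambda>v. v) rs cs = map_mat real_of_int (mat (length rs) (length rs) (\<lambda>(i, j). (es ! j) (rs ! i)))"
    by (rule eq_matI) (use es len in auto)
  ultimately show "det (colmat (\<lambda>v. v) rs cs) \<in> {-1, 0, 1}" by auto
qed

lemma tu_cols_sign_closure:
  fixes V :: "('r \<Rightarrow> 'a::comm_ring_1) set"
  assumes tu: "tu_cols (\<lambda>v. v) V"
  shows "tu_cols (\<lambda>v. v) (V \<union> uminus ` V \<union> {\<lambda>_. 0})"
  unfolding tu_cols_def
proof (intro allI impI)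
  fix rs :: "'r list" and cs
  assume rs: "distinct rs" and "set cs \<subseteq> V \<union> uminus ` V \<union> {\<lambda>_. 0}" "length rs = length cs"
  then show "det (colmat (\<lambda>v. v) rs cs) \<in> {-1, 0, 1}"
  proof (induction "length (filter (\<lambda>c. c \<notin> V) cs)" arbitrary: cs rule: less_induct)
    case less
    show ?case
    proof (cases "set cs \<subseteq> V")
      case True
      then show ?thesis using tu_colsD[OF tu rs] less.prems(3) by simp
    next
      case False
      then obtain j where j: "j < length cs" "cs ! j \<notin> V" by (metis in_set_conv_nth subsetI)
      then have "cs ! j \<in> uminus ` V \<union> {\<lambda>_. 0}" using less.prems(2) nth_mem by blast
      then consider "cs ! j = (\<lambda>_. 0)" | v where "v \<in> V" "cs ! j = - v" by blast
      then show ?thesis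
      proof cases
        case 1
        then show ?thesis using det_colmat_zero_col[OF j(1) less.prems(3), where A = "\<lambda>v. v"] by simp
      next
        case (2 v)
        have "det (colmat (\<lambda>v. v) rs (cs[j := v])) \<in> {-1, 0, 1}"
        proof (rule less.hyps)
          show "length (filter (\<lambda>c. c \<notin> V) (cs[j := v])) < length (filter (\<lambda>c. c \<notin> V) cs)"
            using length_filter_list_update[of j cs "\<lambda>c. c \<notin> V" v] j 2(1) by simp
          show "set (cs[j := v]) \<subseteq> V \<union> uminus ` V \<union> {\<lambda>_. 0}"
            using less.prems(2) 2(1) set_update_subset_insert[of cs j v] by blast
        qed (use less.prems in simp_all)
        moreover have "det (colmat (\<lambda>v. v) rs (cs[j := v])) = - det (colmat (\<lambda>v. v) rs cs)"
          using det_colmat_neg_col[OF j(1) less.prems(3), where A = "\<lambda>v. v"] 2(2) by simp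
        ultimately show ?thesis by (auto simp: minus_equation_iff)
      qed
    qed
  qed
qed

lemma tu_cols_insert_unit_vectors:
  fixes V :: "('r \<Rightarrow> real) set"
  assumes tu: "tu_cols (\<lambda>v. v) V"
  shows "tu_cols (\<lambda>v. v) (V \<union> range (\<lambda>r. ind {r}))"
  unfolding tu_cols_def
proof (intro allI impI)
  fix rs :: "'r list" and cs
  assume "distinct rs" "set cs \<subseteq> V \<union> range (\<lambda>r. ind {r})" "length rs = length cs"
  then show "det (colmat (\<lambda>v. v) rs cs) \<in> {-1, 0, 1}"
  proof (induction "length cs" arbitrary: rs cs rule: less_induct)
    case less
    show ?case
    proof (cases "set cs \<subseteq> V")
      case True
      then show ?thesis using tu_colsD[OF tu] less.prems by simp
    next
      case False
      then obtain j where j: "j < length cs" "cs ! j \<notin> V" by (metis in_set_conv_nth subsetI)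
      then obtain r where r: "cs ! j = ind {r}" using less.prems(2) nth_mem by blast
      show ?thesis
      proof (cases "r \<in> set rs")
        case True
        then obtain i where i: "i < length rs" "rs ! i = r" by (auto simp: in_set_conv_nth)
        have "rs ! i' \<noteq> r" if "i' < length rs" "i' \<noteq> i" for i'
          using that i less.prems(1) nth_eq_iff_index_eq by metis
        moreover have "det (colmat (\<lambda>v. v) (remove_nth i rs) (remove_nth j cs)) \<in> {-1, 0, 1}"
        proof (rule less.hyps)
          show "set (remove_nth j cs) \<subseteq> V \<union> range (\<lambda>r. ind {r})"
            using subset_trans[OF set_remove_nth_subset less.prems(2)] .
        qed (use i j less.prems(1,3) in \<open>simp_all add: distinct_remove_nth\<close>)
        ultimately show ?thesis
          using det_colmat_unit_col[OF i(1) j(1) less.prems(3), where A = "\<lambda>v. v"] i(2) r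
          by (simp add: ind_def)
      next
        case False
        then have "rs ! i \<noteq> r" if "i < length rs" for i using that nth_mem by metis
        then show ?thesis
          using det_colmat_zero_col[OF j(1) less.prems(3), where A = "\<lambda>v. v"] r by (simp add: ind_def)
      qed
    qed
  qed
qed

lemma Bcol_Inl [simp]: "Bcol fo v (Inl g) = (if fo = Some g then 1 else 0)"
  by (simp add: Bcol_def)

lemma Bcol_Inr [simp]: "Bcol fo v (Inr w) = v w"
  by (simp add: Bcol_def)

lemma tu_cols_Bcol_None:
  fixes E :: "('w \<Rightarrow> real) set"
  assumes tu: "tu_cols (\<lambda>v. v) E"
  shows "tu_cols (\<lambda>v. v) (Bcol (None :: 'f option) ` E)"
  unfolding tu_cols_def
proof (intro allI impI)
  fix rs :: "('f + 'w) list" and cs :: "('f + 'w \<Rightarrow> real) list"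
  assume rs: "distinct rs" and cs: "set cs \<subseteq> Bcol None ` E" and len: "length rs = length cs"
  show "det (colmat (\<lambda>v. v) rs cs) \<in> {-1, 0, 1}"
  proof (cases "\<exists>i<length rs. isl (rs ! i)")
    case True
    then obtain i g where i: "i < length rs" "rs ! i = Inl g" by (meson isl_def)
    have "\<forall>j<length cs. (cs ! j) (rs ! i) = 0" using i cs by (auto simp: subset_iff dest!: nth_mem)
    then show ?thesis using det_colmat_zero_row[OF i(1) len, where A = "\<lambda>v. v"] by simp
  next
    case False
    define ws where "ws = map projr rs"
    have rs_ws: "rs = map Inr ws"
    proof (rule nth_equalityI)
      fix i assume i: "i < length rs"
      then have "\<not> isl (rs ! i)" using False by auto
      then show "rs ! i = map Inr ws ! i" using i by (cases "rs ! i") (auto simp: ws_def)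
    qed (simp add: ws_def)
    have "colmat (\<lambda>v. v) rs cs = colmat (\<lambda>v. v) ws (map (\<lambda>c w. c (Inr w)) cs)"
      by (rule eq_matI) (use rs_ws len in auto)
    moreover have "set (map (\<lambda>c w. c (Inr w)) cs) \<subseteq> E" using cs by auto
    ultimately show ?thesis using tu_colsD[OF tu] rs rs_ws len by (simp add: distinct_map)
  qed
qed

lemma colmat_replace_absent_firm_col:
  assumes "Inl g \<notin> set rs" "j < length cs" "cs ! j = Bcol (Some g) v"
  shows "colmat (\<lambda>v. v) rs (cs[j := Bcol None v]) = colmat (\<lambda>v. v) rs cs"
proof (rule eq_matI)
  fix i j' assume "i < dim_row (colmat (\<lambda>v. v) rs cs)" "j' < dim_col (colmat (\<lambda>v. v) rs cs)"
  moreover have "rs ! i \<noteq> Inl g" if "i < length rs" using assms(1) that nth_mem by metis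
  ultimately show "colmat (\<lambda>v. v) rs (cs[j := Bcol None v]) $$ (i, j') = colmat (\<lambda>v. v) rs cs $$ (i, j')"
    using assms(3) by (cases "j' = j"; cases "rs ! i") auto
qed simp_all

lemma det_colmat_subtract_firm_col:
  assumes j: "j < length cs" "j2 < length cs" "j2 \<noteq> j" and len: "length rs = length cs"
    and v: "cs ! j = Bcol (Some g) v" "cs ! j2 = Bcol (Some g) v2"
  shows "det (colmat (\<lambda>v. v) rs (cs[j := Bcol None (v - v2)])) = det (colmat (\<lambda>v. v) rs cs)"
proof -
  let ?M = "colmat (\<lambda>v. v) rs cs"
  have "colmat (\<lambda>v. v) rs (cs[j := Bcol None (v - v2)]) = addcol (-1) j j2 ?M"
  proof (rule eq_matI)
    fix i j' assume "i < dim_row (addcol (-1) j j2 ?M)" "j' < dim_col (addcol (-1) j j2 ?M)"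
    then show "colmat (\<lambda>v. v) rs (cs[j := Bcol None (v - v2)]) $$ (i, j') = addcol (-1) j j2 ?M $$ (i, j')"
      using j v len by (cases "j' = j"; cases "rs ! i") auto
  qed simp_all
  then show ?thesis using det_addcol[OF j(2) j(3)[symmetric], of ?M] len by (metis colmat_carrier)
qed

text \<open>The columns of B: a column \<open>v\<close> of firm \<open>f\<close> is stacked under the unit vector of \<open>f\<close>,
  a column of the null firm under zero.\<close>

definition stacked_cols :: "('f \<Rightarrow> ('w \<Rightarrow> real) set) \<Rightarrow> ('w \<Rightarrow> real) set \<Rightarrow> ('f + 'w \<Rightarrow> real) set" where
  "stacked_cols V E = (\<Union>f. Bcol (Some f) ` V f) \<union> Bcol None ` E"

definition firm_count :: "('f + 'w \<Rightarrow> real) list \<Rightarrow> nat" where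
  "firm_count cs = length (filter (\<lambda>c. \<exists>g. c (Inl g) \<noteq> 0) cs)"

lemma firm_count_update_less:
  assumes "j < length cs" "(cs ! j) (Inl g) \<noteq> 0"
  shows "firm_count (cs[j := Bcol None u]) < firm_count cs"
proof -
  have "\<exists>g. (cs ! j) (Inl g) \<noteq> 0" using assms(2) by blast
  then show ?thesis
    using length_filter_list_update[OF assms(1), of "\<lambda>c. \<exists>g. c (Inl g) \<noteq> 0" "Bcol None u"]
    unfolding firm_count_def by simp
qed

lemma firm_count_remove_nth_less:
  assumes "j < length cs" "(cs ! j) (Inl g) \<noteq> 0"
  shows "firm_count (remove_nth j cs) < firm_count cs"
proof -
  have "\<exists>g. (cs ! j) (Inl g) \<noteq> 0" using assms(2) by blast
  then show ?thesis
    using length_filter_remove_nth[OF assms(1), of "\<lambda>c. \<exists>g. c (Inl g) \<noteq> 0"]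
    unfolding firm_count_def by simp
qed

lemma stacked_col_firm:
  "c \<in> stacked_cols V E \<Longrightarrow> c (Inl g) \<noteq> 0 \<Longrightarrow> \<exists>v\<in>V g. c = Bcol (Some g) v"
  unfolding stacked_cols_def by (auto split: if_splits)

lemma stacked_cols_null:
  assumes "C \<subseteq> stacked_cols V E" "\<forall>c\<in>C. \<forall>g. c (Inl g) = 0"
  shows "C \<subseteq> Bcol None ` E"
proof
  fix c assume c: "c \<in> C"
  have "c \<notin> Bcol (Some f) ` V f" for f using assms(2) c by (metis Bcol_Inl image_iff one_neq_zero)
  then show "c \<in> Bcol None ` E" using assms(1) c unfolding stacked_cols_def by blast
qed

text \<open>One reduction step for a firm column: if its firm's row is not selected it can be replaced
  by a null-firm column; if another column of the same firm is present their difference is a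
  null-firm column; otherwise the firm's row is a unit row.\<close>

lemma det_stacked_cols_reduce:
  fixes V :: "'f \<Rightarrow> ('w \<Rightarrow> real) set" and E :: "('w \<Rightarrow> real) set"
  assumes V_sub: "\<And>f. V f \<subseteq> E" and V_diff: "\<And>f v1 v2. v1 \<in> V f \<Longrightarrow> v2 \<in> V f \<Longrightarrow> v1 - v2 \<in> E"
    and rs: "distinct rs" and cs: "set cs \<subseteq> stacked_cols V E" and len: "length rs = length cs"
    and j: "j < length cs" "(cs ! j) (Inl g) \<noteq> 0"
    and IH: "\<And>rs' cs'. firm_count cs' < firm_count cs \<Longrightarrow> distinct rs' \<Longrightarrow> set cs' \<subseteq> stacked_cols V E \<Longrightarrow>
      length rs' = length cs' \<Longrightarrow> det (colmat (\<lambda>v. v) rs' cs') \<in> {-1, 0, 1}"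
  shows "det (colmat (\<lambda>v. v) rs cs) \<in> {-1, 0, 1}"
proof -
  have cs_j: "cs ! j \<in> stacked_cols V E" using cs j(1) by (meson nth_mem subsetD)
  obtain v where v: "v \<in> V g" "cs ! j = Bcol (Some g) v" using stacked_col_firm[OF cs_j j(2)] by blast
  have IH_update: "det (colmat (\<lambda>v. v) rs (cs[j := Bcol None u])) \<in> {-1, 0, 1}" if "u \<in> E" for u
  proof (rule IH[OF firm_count_update_less[OF j] rs])
    show "set (cs[j := Bcol None u]) \<subseteq> stacked_cols V E"
      using that cs set_update_subset_insert[of cs j "Bcol None u"] unfolding stacked_cols_def by blast
  qed (use len in simp)
  show ?thesis
  proof (cases "Inl g \<in> set rs")
    case False
    then show ?thesis
      using IH_update[of v] V_sub v(1) colmat_replace_absent_firm_col[OF False j(1) v(2)] by auto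
  next
    case True
    then obtain i where i: "i < length rs" "rs ! i = Inl g" by (metis in_set_conv_nth)
    show ?thesis
    proof (cases "\<exists>j2<length cs. j2 \<noteq> j \<and> (cs ! j2) (Inl g) \<noteq> 0")
      case True
      then obtain j2 where j2: "j2 < length cs" "j2 \<noteq> j" "(cs ! j2) (Inl g) \<noteq> 0" by blast
      have cs_j2: "cs ! j2 \<in> stacked_cols V E" using cs j2(1) by (meson nth_mem subsetD)
      obtain v2 where v2: "v2 \<in> V g" "cs ! j2 = Bcol (Some g) v2"
        using stacked_col_firm[OF cs_j2 j2(3)] by blast
      show ?thesis
        using IH_update[OF V_diff[OF v(1) v2(1)]]
          det_colmat_subtract_firm_col[OF j(1) j2(1,2) len v(2) v2(2)] by simp
    next
      case False
      have "det (colmat (\<lambda>v. v) (remove_nth i rs) (remove_nth j cs)) \<in> {-1, 0, 1}"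
      proof (rule IH[OF firm_count_remove_nth_less[OF j] distinct_remove_nth[OF rs]])
        show "set (remove_nth j cs) \<subseteq> stacked_cols V E"
          using subset_trans[OF set_remove_nth_subset cs] .
      qed (use i j len in simp)
      then show ?thesis
        using det_colmat_unit_row[OF i(1) j(1) len, where A = "\<lambda>v. v"] False i(2) v(2) by auto
    qed
  qed
qed

lemma tu_cols_stacked_cols:
  fixes V :: "'f \<Rightarrow> ('w \<Rightarrow> real) set" and E :: "('w \<Rightarrow> real) set"
  assumes tu: "tu_cols (\<lambda>v. v) E"
    and V_sub: "\<And>f. V f \<subseteq> E"
    and V_diff: "\<And>f v1 v2. v1 \<in> V f \<Longrightarrow> v2 \<in> V f \<Longrightarrow> v1 - v2 \<in> E"
  shows "tu_cols (\<lambda>v. v) (stacked_cols V E)"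
  unfolding tu_cols_def
proof (intro allI impI)
  fix rs :: "('f + 'w) list" and cs :: "('f + 'w \<Rightarrow> real) list"
  assume "distinct rs" "set cs \<subseteq> stacked_cols V E" "length rs = length cs"
  then show "det (colmat (\<lambda>v. v) rs cs) \<in> {-1, 0, 1}"
  proof (induction "firm_count cs" arbitrary: rs cs rule: less_induct)
    case less
    show ?case
    proof (cases "\<exists>j<length cs. \<exists>g. (cs ! j) (Inl g) \<noteq> 0")
      case True
      then obtain j g where "j < length cs" "(cs ! j) (Inl g) \<noteq> 0" by blast
      from det_stacked_cols_reduce[OF V_sub V_diff less.prems this less.hyps] show ?thesis .
    next
      case False
      then have "\<forall>c\<in>set cs. \<forall>g. c (Inl g) = 0" by (auto simp: in_set_conv_nth)
      then have "set cs \<subseteq> Bcol None ` E" by (rule stacked_cols_null[OF less.prems(2)])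
      then show ?thesis using tu_colsD[OF tu_cols_Bcol_None[OF tu]] less.prems(1,3) by blast
    qed
  qed
qed

section \<open>Integral solutions of totally unimodular systems\<close>

lemma sum_set_conv_nth: "distinct cs \<Longrightarrow> (\<Sum>c\<in>set cs. f c) = (\<Sum>j<length cs. f (cs ! j))"
  by (simp add: sum_list_distinct_conv_sum_set[symmetric] sum_list_sum_nth atLeast0LessThan)

lemma det_Ints:
  assumes "(M :: real mat) \<in> carrier_mat n n" "\<forall>i<n. \<forall>j<n. M $$ (i, j) \<in> \<int>"
  shows "det M \<in> \<int>"
proof -
  have "M = map_mat real_of_int (map_mat floor M)"
    by (rule eq_matI) (use assms in \<open>auto elim!: Ints_cases\<close>)
  then have "det M = real_of_int (det (map_mat floor M))" by (metis of_int_hom.hom_det)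
  then show ?thesis by simp
qed

text \<open>If every extension of a nonsingular minor by a further row is singular, expanding along
  that row gives a linear relation among the columns whose coefficients, the cofactors, do not
  depend on the row.\<close>

lemma cofactor_dependence:
  fixes A :: "'c \<Rightarrow> 'r \<Rightarrow> 'a::comm_ring_1"
  assumes dist: "distinct (cs @ [c])" and len: "length rs = length cs"
    and singular: "\<forall>r. det (colmat A (rs @ [r]) (cs @ [c])) = 0"
  shows "\<exists>y. y c = det (colmat A rs cs) \<and> (\<forall>c'. c' \<notin> set (cs @ [c]) \<longrightarrow> y c' = 0) \<and>
             (\<forall>r. (\<Sum>c'\<in>set (cs @ [c]). y c' * A c' r) = 0)"
proof -
  let ?k = "length cs" and ?cs = "cs @ [c]"
  define w where "w j = (-1) ^ (?k + j) * det (colmat A rs (remove_nth j ?cs))" for j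
  define y where "y c' = (\<Sum>j\<in>{j. j < Suc ?k \<and> ?cs ! j = c'}. w j)" for c'
  have y_nth: "y (?cs ! j) = w j" if "j < Suc ?k" for j
  proof -
    have "{j'. j' < Suc ?k \<and> ?cs ! j' = ?cs ! j} = {j}"
      using dist that by (auto simp: nth_eq_iff_index_eq)
    then show ?thesis by (simp add: y_def)
  qed
  have "(\<Sum>c'\<in>set ?cs. y c' * A c' r) = 0" for r
  proof -
    let ?M = "colmat A (rs @ [r]) ?cs"
    have M: "?M \<in> carrier_mat (Suc ?k) (Suc ?k)" using len by (metis colmat_carrier length_append_singleton)
    have "0 = det ?M" using singular by simp
    also have "\<dots> = (\<Sum>j<Suc ?k. ?M $$ (?k, j) * cofactor ?M ?k j)"
      by (rule laplace_expansion_row[OF M]) simp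
    also have "\<dots> = (\<Sum>j<Suc ?k. y (?cs ! j) * A (?cs ! j) r)"
    proof (rule sum.cong[OF refl])
      fix j assume j: "j \<in> {..<Suc ?k}"
      have "cofactor ?M ?k j = w j"
        unfolding cofactor_def w_def using len j by (subst mat_delete_colmat) (auto simp: len[symmetric])
      then show "?M $$ (?k, j) * cofactor ?M ?k j = y (?cs ! j) * A (?cs ! j) r"
        using j y_nth len by (simp add: nth_append)
    qed
    also have "\<dots> = (\<Sum>c'\<in>set ?cs. y c' * A c' r)"
      using sum_set_conv_nth[OF dist, of "\<lambda>c'. y c' * A c' r"] by simp
    finally show ?thesis by simp
  qed
  moreover have "y c = det (colmat A rs cs)"
    using y_nth[of ?k] by (simp add: w_def)
  moreover have "y c' = 0" if "c' \<notin> set ?cs" for c'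
    using that unfolding y_def by (metis (mono_tags, lifting) mem_Collect_eq nth_mem sum.neutral length_append_singleton)
  ultimately show ?thesis by blast
qed

lemma nonsingular_minor_or_dependent:
  fixes A :: "'c \<Rightarrow> 'r \<Rightarrow> 'a::comm_ring_1"
  assumes "distinct cs"
  shows "(\<exists>rs. distinct rs \<and> length rs = length cs \<and> det (colmat A rs cs) \<noteq> 0) \<or>
         (\<exists>y. (\<exists>c\<in>set cs. y c \<noteq> 0) \<and> (\<forall>c. c \<notin> set cs \<longrightarrow> y c = 0) \<and>
              (\<forall>r. (\<Sum>c\<in>set cs. y c * A c r) = 0))"
  using assms
proof (induction cs rule: rev_induct)
  case Nil
  have "det (colmat A [] []) = 1" by (rule det_dim_zero) (metis colmat_carrier list.size(3))
  then show ?case by auto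
next
  case (snoc c cs)
  then have "distinct cs" by simp
  from snoc.IH[OF this] show ?case
  proof (elim disjE exE conjE)
    fix y assume "\<exists>c\<in>set cs. y c \<noteq> 0" "\<forall>c. c \<notin> set cs \<longrightarrow> y c = 0"
      "\<forall>r. (\<Sum>c\<in>set cs. y c * A c r) = 0"
    then show ?thesis using snoc.prems by (intro disjI2 exI[of _ y]) auto
  next
    fix rs assume rs: "distinct rs" "length rs = length cs" "det (colmat A rs cs) \<noteq> 0"
    show ?thesis
    proof (cases "\<exists>r. det (colmat A (rs @ [r]) (cs @ [c])) \<noteq> 0")
      case True
      then obtain r where r: "det (colmat A (rs @ [r]) (cs @ [c])) \<noteq> 0" by blast
      have "r \<notin> set rs"
      proof
        assume "r \<in> set rs"
        then obtain i where "i < length rs" "rs ! i = r" by (auto simp: in_set_conv_nth)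
        then have "det (colmat A (rs @ [r]) (cs @ [c])) = 0"
          using rs(2) by (intro det_colmat_repeated_row[of i _ "length rs"]) (auto simp: nth_append)
        then show False using r by simp
      qed
      then show ?thesis using rs r by (intro disjI1 exI[of _ "rs @ [r]"]) auto
    next
      case False
      then obtain y where y: "y c = det (colmat A rs cs)" "\<forall>c'. c' \<notin> set (cs @ [c]) \<longrightarrow> y c' = 0"
          "\<forall>r. (\<Sum>c'\<in>set (cs @ [c]). y c' * A c' r) = 0"
        using cofactor_dependence[OF snoc.prems rs(2), of A] by auto
      have "\<exists>c'\<in>set (cs @ [c]). y c' \<noteq> 0" using y(1) rs(3) by auto
      then show ?thesis using y(2,3) by blast
    qed
  qed
qed

text \<open>Moving a nonnegative solution along a kernel direction until a coordinate hits zero.\<close>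

lemma solution_support_shrink:
  fixes A :: "'c \<Rightarrow> 'r \<Rightarrow> real"
  assumes fin: "finite C"
    and x_nonneg: "\<forall>c. 0 \<le> x c" and x_supp: "\<forall>c. c \<notin> C \<longrightarrow> x c = 0"
    and sol: "\<forall>r. (\<Sum>c\<in>C. x c * A c r) = b r"
    and y: "\<exists>c. y c < 0" "\<forall>c. y c \<noteq> 0 \<longrightarrow> c \<in> C \<and> x c \<noteq> 0" "\<forall>r. (\<Sum>c\<in>C. y c * A c r) = 0"
  shows "\<exists>x'. (\<forall>c. 0 \<le> x' c) \<and> (\<forall>c. c \<notin> C \<longrightarrow> x' c = 0) \<and> (\<forall>r. (\<Sum>c\<in>C. x' c * A c r) = b r) \<and>
             card {c\<in>C. x' c \<noteq> 0} < card {c\<in>C. x c \<noteq> 0}"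
proof -
  let ?N = "{c\<in>C. y c < 0}"
  have N: "finite ?N" "?N \<noteq> {}" using fin y(1,2) by force+
  define lam where "lam = Min ((\<lambda>c. x c / - y c) ` ?N)"
  have "lam \<in> (\<lambda>c. x c / - y c) ` ?N" unfolding lam_def using N by (intro Min_in) auto
  then obtain c0 where c0: "c0 \<in> ?N" "lam = x c0 / - y c0" by blast
  have lam_le: "lam \<le> x c / - y c" if "c \<in> ?N" for c
    unfolding lam_def using N that by (intro Min_le) auto
  have "0 \<le> lam" using c0 x_nonneg by (simp add: divide_nonneg_neg)
  define x' where "x' c = x c + lam * y c" for c
  have "0 \<le> x' c" for c
  proof (cases "y c < 0")
    case True
    then have "c \<in> ?N" using y(2) by force
    moreover have "0 < - y c" using True by simp
    ultimately have "lam * - y c \<le> x c" using lam_le by (metis pos_le_divide_eq)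
    then show ?thesis by (simp add: x'_def)
  next
    case False
    then show ?thesis using \<open>0 \<le> lam\<close> x_nonneg by (simp add: x'_def)
  qed
  moreover have "x' c = 0" if "c \<notin> C" for c
    using that x_supp y(2) by (auto simp: x'_def)
  moreover have "(\<Sum>c\<in>C. x' c * A c r) = b r" for r
    using sol y(3) by (simp add: x'_def algebra_simps sum.distrib sum_distrib_left[symmetric])
  moreover have "card {c\<in>C. x' c \<noteq> 0} < card {c\<in>C. x c \<noteq> 0}"
  proof (rule psubset_card_mono)
    have "x c \<noteq> 0" if "x' c \<noteq> 0" for c using that y(2) by (force simp: x'_def)
    moreover have "x' c0 = 0" "c0 \<in> C" "x c0 \<noteq> 0" using c0 y(2) by (auto simp: x'_def)
    ultimately show "{c\<in>C. x' c \<noteq> 0} \<subset> {c\<in>C. x c \<noteq> 0}" by blast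
  qed (use fin in simp)
  ultimately show ?thesis by blast
qed

context
  fixes A :: "'c \<Rightarrow> 'r \<Rightarrow> real" and C :: "'c set" and b :: "'r \<Rightarrow> real"
  assumes tu: "tu_cols A C" and b_int: "\<forall>r. b r \<in> \<int>"
begin

lemma solution_integral_if_nonsingular:
  assumes cs: "distinct cs" "set cs \<subseteq> C" and rs: "distinct rs" "length rs = length cs"
    and nonsing: "det (colmat A rs cs) \<noteq> 0"
    and sol: "\<forall>r. (\<Sum>c\<in>set cs. x c * A c r) = b r"
    and c: "c \<in> set cs"
  shows "x c \<in> \<int>"
proof -
  let ?k = "length cs" and ?M = "colmat A rs cs"
  have M: "?M \<in> carrier_mat ?k ?k" by (metis colmat_carrier rs(2))
  have unimod: "det ?M = 1 \<or> det ?M = -1" using tu_colsD[OF tu rs(1) cs(2) rs(2)] nonsing by auto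
  have entries: "A c' r \<in> \<int>" if "c' \<in> set cs" for c' r
  proof -
    have "A c' r \<in> {-1, 0, 1}" using tu_cols_entry[OF tu] that cs(2) by blast
    then show ?thesis by auto
  qed
  define xv where "xv = vec ?k (\<lambda>j. x (cs ! j))"
  have Mx: "?M *\<^sub>v xv = vec ?k (\<lambda>i. b (rs ! i))"
  proof (rule eq_vecI)
    fix i assume "i < dim_vec (vec ?k (\<lambda>i. b (rs ! i)))"
    then have i: "i < ?k" by simp
    have "(?M *\<^sub>v xv) $ i = (\<Sum>j<?k. A (cs ! j) (rs ! i) * x (cs ! j))"
      using i rs(2) by (simp add: mult_mat_vec_def scalar_prod_def xv_def Matrix.row_def atLeast0LessThan)
    also have "\<dots> = b (rs ! i)"
      using sol sum_set_conv_nth[OF cs(1), of "\<lambda>c. x c * A c (rs ! i)"] by (simp add: mult.commute)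
    finally show "(?M *\<^sub>v xv) $ i = vec ?k (\<lambda>i. b (rs ! i)) $ i" using i by simp
  qed (simp add: rs(2))
  obtain j where j: "j < ?k" "cs ! j = c" using c by (auto simp: in_set_conv_nth)
  have "det (replace_col ?M (?M *\<^sub>v xv) j) \<in> \<int>"
    by (rule det_Ints) (use Mx b_int entries rs(2) in \<open>auto simp: replace_col_def\<close>)
  moreover have "det (replace_col ?M (?M *\<^sub>v xv) j) = x c * det ?M"
    using cramer_lemma_mat[OF M _ j(1), of xv] j by (simp add: xv_def)
  ultimately show ?thesis using unimod by (metis Ints_minus minus_mult_minus mult.right_neutral mult_minus1_right)
qed

theorem tu_integral_solution:
  assumes fin: "finite C"
  shows "\<forall>c. 0 \<le> x c \<Longrightarrow> \<forall>c. c \<notin> C \<longrightarrow> x c = 0 \<Longrightarrow> \<forall>r. (\<Sum>c\<in>C. x c * A c r) = b r \<Longrightarrow>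
    \<exists>z. (\<forall>c. z c \<in> \<int> \<and> 0 \<le> z c) \<and> (\<forall>c. c \<notin> C \<longrightarrow> z c = 0) \<and> (\<forall>r. (\<Sum>c\<in>C. z c * A c r) = b r)"
proof (induction "card {c\<in>C. x c \<noteq> 0}" arbitrary: x rule: less_induct)
  case less
  obtain cs where cs: "set cs = {c\<in>C. x c \<noteq> 0}" "distinct cs"
    using finite_distinct_list[of "{c\<in>C. x c \<noteq> 0}"] fin by auto
  have sum_cs: "(\<Sum>c\<in>C. f c) = (\<Sum>c\<in>set cs. f c)" if "\<forall>c. c \<notin> set cs \<longrightarrow> f c = 0" for f :: "'c \<Rightarrow> real"
    by (rule sum.mono_neutral_right) (use fin cs that in auto)
  have "(\<Sum>c\<in>C. x c * A c r) = (\<Sum>c\<in>set cs. x c * A c r)" for r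
    by (rule sum_cs) (use cs(1) less.prems(2) in auto)
  then have "(\<Sum>c\<in>set cs. x c * A c r) = b r" for r using less.prems(3) by simp
  then have sol_cs: "\<forall>r. (\<Sum>c\<in>set cs. x c * A c r) = b r" ..
  from nonsingular_minor_or_dependent[OF cs(2), of A] show ?case
  proof (elim disjE exE conjE)
    fix rs assume "distinct rs" "length rs = length cs" "det (colmat A rs cs) \<noteq> 0"
    then have "x c \<in> \<int>" if "c \<in> set cs" for c
      using solution_integral_if_nonsingular[OF cs(2) _ _ _ _ sol_cs that] cs(1) by blast
    moreover have "x c = 0" if "c \<notin> set cs" for c using that cs(1) less.prems(2) by auto
    ultimately show ?thesis using less.prems by (metis Ints_0)
  next
    fix y assume y: "\<exists>c\<in>set cs. y c \<noteq> 0" "\<forall>c. c \<notin> set cs \<longrightarrow> y c = 0"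
      "\<forall>r. (\<Sum>c\<in>set cs. y c * A c r) = 0"
    then obtain c0 where "y c0 \<noteq> 0" by blast
    define s :: real where "s = (if y c0 < 0 then 1 else -1)"
    have s: "s * y c0 < 0" using \<open>y c0 \<noteq> 0\<close> by (auto simp: s_def)
    have "(\<Sum>c\<in>C. s * y c * A c r) = 0" for r
      using y(2,3) sum_cs[of "\<lambda>c. s * y c * A c r"] by (simp add: mult.assoc sum_distrib_left[symmetric])
    then have "\<forall>r. (\<Sum>c\<in>C. s * y c * A c r) = 0" ..
    moreover have "\<forall>c. s * y c \<noteq> 0 \<longrightarrow> c \<in> C \<and> x c \<noteq> 0" using y(2) cs(1) by auto
    ultimately obtain x' where x': "\<forall>c. 0 \<le> x' c" "\<forall>c. c \<notin> C \<longrightarrow> x' c = 0"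
        "\<forall>r. (\<Sum>c\<in>C. x' c * A c r) = b r" "card {c\<in>C. x' c \<noteq> 0} < card {c\<in>C. x c \<noteq> 0}"
      using solution_support_shrink[OF fin less.prems, of "\<lambda>c. s * y c"] s(1) by blast
    then show ?thesis using less.hyps by blast
  qed
qed

end

section \<open>Stability through availability vectors\<close>

lemma A_le_nonneg: "\<forall>fo w. 0 \<le> N fo w \<Longrightarrow> 0 \<le> A_le PW N f w"
  unfolding A_le_def by (rule sum_nonneg) auto

lemma A_le_ge_own: "\<forall>fo w. 0 \<le> N fo w \<Longrightarrow> N (Some f) w \<le> A_le PW N f w"
  unfolding A_le_def by (rule member_le_sum) auto

lemma A_le_ge_preferred:
  assumes "\<forall>fo w. 0 \<le> N fo w" "PW w (Some f) g" "g \<noteq> Some f"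
  shows "N (Some f) w + N g w \<le> A_le PW N f w"
proof -
  have "(\<Sum>fo\<in>{Some f, g}. N fo w) \<le> A_le PW N f w"
    unfolding A_le_def by (rule sum_mono2) (use assms in auto)
  then show ?thesis using assms(3) by simp
qed

lemma not_blocking_iff_chhat_eq:
  fixes P :: "'w::finite set \<Rightarrow> 'w set \<Rightarrow> bool"
  assumes Q_nonneg: "\<forall>w. 0 \<le> Q w" and X_le: "\<forall>w. X w \<le> Q w"
  shows "\<not> (\<exists>M''. (\<forall>w. 0 \<le> M'' w \<and> M'' w \<le> 1) \<and> firm_prefers P M'' X \<and> (\<forall>w. M'' w \<le> Q w))
    \<longleftrightarrow> chhat P Q = X"
proof
  have chhat_max: "chhat P (\<lambda>w. max (M'' w) (X w)) = chhat P Q"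
    if "\<forall>w. chhat P Q w \<le> max (M'' w) (X w)" "\<forall>w. M'' w \<le> Q w" for M''
    by (rule chhat_eq_if_between[OF Q_nonneg]) (use that X_le in auto)
  show "chhat P Q = X" if unblocked: "\<not> (\<exists>M''. (\<forall>w. 0 \<le> M'' w \<and> M'' w \<le> 1) \<and> firm_prefers P M'' X \<and> (\<forall>w. M'' w \<le> Q w))"
  proof (rule ccontr)
    assume ne: "chhat P Q \<noteq> X"
    have "\<forall>w. chhat P Q w \<le> Q w" using chhat_le[OF Q_nonneg] by blast
    moreover have "\<forall>w. 0 \<le> chhat P Q w \<and> chhat P Q w \<le> 1"
      using chhat_nonneg[OF Q_nonneg] chhat_le_1[OF Q_nonneg] by blast
    moreover have "firm_prefers P (chhat P Q) X"
      unfolding firm_prefers_def using chhat_max[of "chhat P Q"] calculation(1) ne by simp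
    ultimately show False using unblocked by blast
  qed
  show "\<not> (\<exists>M''. (\<forall>w. 0 \<le> M'' w \<and> M'' w \<le> 1) \<and> firm_prefers P M'' X \<and> (\<forall>w. M'' w \<le> Q w))"
    if choice: "chhat P Q = X"
  proof
    assume "\<exists>M''. (\<forall>w. 0 \<le> M'' w \<and> M'' w \<le> 1) \<and> firm_prefers P M'' X \<and> (\<forall>w. M'' w \<le> Q w)"
    then obtain M'' where "firm_prefers P M'' X" "\<forall>w. M'' w \<le> Q w" by blast
    then show False using chhat_max[of M''] choice unfolding firm_prefers_def by auto
  qed
qed

lemma stable_iff_chhat_A_le:
  fixes PF :: "'f::finite \<Rightarrow> 'w::finite set \<Rightarrow> 'w set \<Rightarrow> bool"
  assumes N_nonneg: "\<forall>fo w. 0 \<le> N fo w"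
  shows "stable PW PF N \<longleftrightarrow>
    (\<forall>f. chhat (PF f) (A_le PW N f) = N (Some f) \<and> (\<forall>w. PW w None (Some f) \<longrightarrow> N (Some f) w = 0))"
proof -
  have Q_nonneg: "\<forall>w. 0 \<le> A_le PW N f w" and X_le: "\<forall>w. N (Some f) w \<le> A_le PW N f w" for f
    using A_le_nonneg[OF N_nonneg] A_le_ge_own[OF N_nonneg] by blast+
  have idem: "N (Some f) = chhat (PF f) (N (Some f))" if "chhat (PF f) (A_le PW N f) = N (Some f)" for f
    using chhat_eq_if_between[OF Q_nonneg[of f], where y = "N (Some f)" and P = "PF f"] that X_le[of f]
    by simp
  have unblocked_iff: "(\<not> (\<exists>M''. (\<forall>w. 0 \<le> M'' w \<and> M'' w \<le> 1) \<and> firm_prefers (PF f) M'' (N (Some f)) \<and>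
      (\<forall>w. M'' w \<le> A_le PW N f w))) \<longleftrightarrow> chhat (PF f) (A_le PW N f) = N (Some f)" for f
    by (rule not_blocking_iff_chhat_eq[OF Q_nonneg X_le])
  show ?thesis
  proof
    assume "stable PW PF N"
    then show "\<forall>f. chhat (PF f) (A_le PW N f) = N (Some f) \<and> (\<forall>w. PW w None (Some f) \<longrightarrow> N (Some f) w = 0)"
      unfolding stable_def using unblocked_iff by blast
  next
    assume "\<forall>f. chhat (PF f) (A_le PW N f) = N (Some f) \<and> (\<forall>w. PW w None (Some f) \<longrightarrow> N (Some f) w = 0)"
    then show "stable PW PF N"
      unfolding stable_def using unblocked_iff idem by blast
  qed
qed

section \<open>The columns of the matrix B\<close>

lemma ind_eq_of_int_indI: "ind S w = real_of_int (indI S w)"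
  by (simp add: ind_def indI_def)

lemma ind_eq_of_int_indI_fun: "ind S = (\<lambda>w. real_of_int (indI S w))"
  by (simp add: ind_def indI_def fun_eq_iff)

lemma Ints_01: "(x :: real) \<in> \<int> \<Longrightarrow> 0 \<le> x \<Longrightarrow> x \<le> 1 \<Longrightarrow> x \<in> {0, 1}"
  by (auto elim!: Ints_cases)

locale stable_market =
  fixes PW :: "'w::{finite,linorder} \<Rightarrow> 'f::finite option \<Rightarrow> 'f option \<Rightarrow> bool"
    and PF :: "'f \<Rightarrow> 'w set \<Rightarrow> 'w set \<Rightarrow> bool"
    and M :: "'f option \<Rightarrow> 'w \<Rightarrow> real"
  assumes PF_strict: "strict_total (PF f)"
    and matching: "is_matching M"
    and M_stable: "stable PW PF M"
begin

abbreviation acc :: "'f \<Rightarrow> 'w set list" where "acc f \<equiv> acc_list (PF f)"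

abbreviation t :: "'f \<Rightarrow> real list" where "t f \<equiv> ts_of (PF f) (M (Some f))"

lemma M_nonneg: "0 \<le> M fo w"
  using matching by (simp add: is_matching_def is_pseudo_def)

lemma M_sum: "(\<Sum>fo\<in>UNIV. M fo w) = 1"
  using matching by (simp add: is_matching_def)

lemma M_firm_nonneg: "\<forall>w. 0 \<le> M (Some f) w"
  using M_nonneg by blast

lemma chhat_M: "chhat (PF f) (M (Some f)) = M (Some f)"
  using M_stable by (simp add: stable_def)

lemma M_unacceptable: "PW w None (Some f) \<Longrightarrow> M (Some f) w = 0"
  using M_stable by (simp add: stable_def)

lemma ts_of_A_le: "ts_of (PF f) (A_le PW M f) = t f"
proof -
  have nonneg: "\<forall>fo w. 0 \<le> M fo w" using M_nonneg by blast
  have "chhat (PF f) (A_le PW M f) = M (Some f)"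
    using M_stable stable_iff_chhat_A_le[OF nonneg] by blast
  then show ?thesis
    using ts_of_eq_if_between[of "A_le PW M f" "PF f" "M (Some f)"]
      A_le_nonneg[OF nonneg] A_le_ge_own[OF nonneg] by simp
qed

definition used :: "'f \<Rightarrow> nat list" where
  "used f = filter (\<lambda>k. 0 < t f ! k) [0..<length (acc f)]"

lemma set_used: "set (used f) = {k. k < length (acc f) \<and> 0 < t f ! k}"
  by (auto simp: used_def)

lemma distinct_used: "distinct (used f)"
  by (simp add: used_def)

lemma nth_used: "j < length (used f) \<Longrightarrow> used f ! j < length (acc f) \<and> 0 < t f ! (used f ! j)"
  using nth_mem set_used by blast

lemma sum_used:
  "(\<Sum>j<length (used f). t f ! (used f ! j) * h (used f ! j)) = (\<Sum>k<length (acc f). t f ! k * h k)"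
proof -
  have "(\<Sum>j<length (used f). t f ! (used f ! j) * h (used f ! j)) = (\<Sum>k\<in>set (used f). t f ! k * h k)"
    by (rule sum_set_conv_nth[OF distinct_used, symmetric])
  also have "\<dots> = (\<Sum>k<length (acc f). t f ! k * h k)"
  proof (rule sum.mono_neutral_left)
    show "\<forall>k\<in>{..<length (acc f)} - set (used f). t f ! k * h k = 0"
    proof
      fix k assume "k \<in> {..<length (acc f)} - set (used f)"
      then have "\<not> 0 < t f ! k" "0 \<le> t f ! k"
        using ts_of_nonneg[OF M_firm_nonneg[of f], of k] by (auto simp: set_used)
      then show "t f ! k * h k = 0" by simp
    qed
  qed (auto simp: set_used)
  finally show ?thesis .
qed

lemma Bstar_Some:
  "Bstar PF M (Some f) = map (\<lambda>k. ind (acc f ! k)) (used f) @ (if sum_list (t f) = 1 then [] else [\<lambda>_. 0])"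
  by (simp add: Bstar_def used_def Let_def)

lemma sum_Bstar_Some:
  "(\<Sum>j<length (Bstar PF M (Some f)). h j) =
     (\<Sum>j<length (used f). h j) + (if sum_list (t f) = 1 then 0 else h (length (used f)))"
  by (simp add: Bstar_Some)

lemma Bstar_Some_nth:
  assumes "j < length (Bstar PF M (Some f))"
  obtains "j < length (used f)" "Bstar PF M (Some f) ! j = ind (acc f ! (used f ! j))"
    | "j = length (used f)" "Bstar PF M (Some f) ! j = (\<lambda>_. 0)" "sum_list (t f) \<noteq> 1"
  using assms that by (cases "j < length (used f)") (auto simp: Bstar_Some nth_append split: if_splits)

lemma Bstar_None_nth:
  assumes "j < length (Bstar PF M None)"
  obtains w where "0 < M None w" "Bstar PF M None ! j = ind {w}"
proof -
  let ?ws = "sorted_list_of_set {w. 0 < M None w}"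
  have "j < length ?ws" using assms by (simp add: Bstar_def)
  then have "0 < M None (?ws ! j)" using nth_mem[of j ?ws] by simp
  then show ?thesis using that assms by (simp add: Bstar_def)
qed

lemma Bstar_entry_01:
  assumes "j < length (Bstar PF M fo)"
  shows "(Bstar PF M fo ! j) w \<in> {0, 1}"
proof (cases fo)
  case None
  then obtain w0 where "Bstar PF M fo ! j = ind {w0}" using Bstar_None_nth[of j] assms by metis
  then show ?thesis by (simp add: ind_def)
next
  case (Some f)
  from assms[unfolded Some] show ?thesis
    unfolding Some by (cases rule: Bstar_Some_nth) (auto simp: ind_def)
qed

lemma Bstar_entry_support:
  assumes j: "j < length (Bstar PF M fo)" and nz: "(Bstar PF M fo ! j) w \<noteq> 0"
  shows "0 < M fo w"
proof (cases fo)
  case None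
  then obtain w0 where "0 < M None w0" "Bstar PF M fo ! j = ind {w0}" using Bstar_None_nth[of j] j by metis
  then show ?thesis using nz None by (simp add: ind_def split: if_splits)
next
  case (Some f)
  from j[unfolded Some] show ?thesis
  proof (cases rule: Bstar_Some_nth)
    case 1
    then have "w \<in> acc f ! (used f ! j)" using nz Some by (simp add: ind_def split: if_splits)
    then show ?thesis
      using pos_if_in_used_set[OF M_firm_nonneg] nth_used[OF 1(1)] Some by blast
  next
    case 2
    then show ?thesis using nz Some by simp
  qed
qed

text \<open>M itself as a nonnegative solution of \<open>B x = 1\<close>: the weights \<open>t\<^sub>k\<close> on the used sets,
  the unused capacity on the zero column, and the null firm's mass on the unit columns.\<close>

definition frac_weight :: "'f option \<Rightarrow> nat \<Rightarrow> real" where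
  "frac_weight fo j = (case fo of
     Some f \<Rightarrow> if j < length (used f) then t f ! (used f ! j)
               else if j = length (used f) then 1 - sum_list (t f) else 0
   | None \<Rightarrow> let ws = sorted_list_of_set {w. 0 < M None w} in if j < length ws then M None (ws ! j) else 0)"

lemma frac_weight_nonneg: "0 \<le> frac_weight fo j"
  using M_nonneg nth_used sum_list_ts_of_le_1[OF M_firm_nonneg]
  by (auto simp: frac_weight_def Let_def less_imp_le split: option.split)

lemma frac_weight_beyond: "frac_weight fo j = 0" if "length (Bstar PF M fo) \<le> j"
proof (cases fo)
  case None
  then show ?thesis using that by (simp add: frac_weight_def Bstar_def)
next
  case (Some f)
  then show ?thesis using that by (auto simp: frac_weight_def Bstar_Some split: if_splits)
qed

lemma frac_weight_sum: "(\<Sum>j<length (Bstar PF M (Some f)). frac_weight (Some f) j) = 1"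
proof -
  have "(\<Sum>j<length (used f). frac_weight (Some f) j) = (\<Sum>k<length (acc f). t f ! k * 1)"
    using sum_used[of f "\<lambda>_. 1"] by (simp add: frac_weight_def)
  also have "\<dots> = sum_list (t f)"
    by (simp add: sum_list_sum_nth atLeast0LessThan)
  finally show ?thesis by (simp add: sum_Bstar_Some frac_weight_def)
qed

lemma frac_weight_combination: "(\<Sum>j<length (Bstar PF M fo). frac_weight fo j * (Bstar PF M fo ! j) w) = M fo w"
proof (cases fo)
  case (Some f)
  have "(\<Sum>j<length (used f). frac_weight fo j * (Bstar PF M fo ! j) w)
      = (\<Sum>j<length (used f). t f ! (used f ! j) * ind (acc f ! (used f ! j)) w)"
    by (rule sum.cong) (auto simp: Some frac_weight_def Bstar_Some nth_append)
  also have "\<dots> = chhat (PF f) (M (Some f)) w"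
    using sum_used[of f "\<lambda>k. ind (acc f ! k) w"] by (simp add: chhat_def)
  finally show ?thesis
    using Some chhat_M by (simp add: sum_Bstar_Some Bstar_Some nth_append)
next
  case None
  let ?ws = "sorted_list_of_set {w. 0 < M None w}"
  have "(\<Sum>j<length (Bstar PF M fo). frac_weight fo j * (Bstar PF M fo ! j) w)
      = (\<Sum>j<length ?ws. M None (?ws ! j) * ind {?ws ! j} w)"
    by (rule sum.cong) (auto simp: None frac_weight_def Bstar_def)
  also have "\<dots> = (\<Sum>w'\<in>{w. 0 < M None w}. M None w' * ind {w'} w)"
    using sum_set_conv_nth[of ?ws "\<lambda>w'. M None w' * ind {w'} w"] by simp
  also have "\<dots> = (\<Sum>w'\<in>{w. 0 < M None w}. if w' = w then M None w' else 0)"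
    by (rule sum.cong) (auto simp: ind_def)
  also have "\<dots> = M None w"
    using M_nonneg[of None w] by (auto simp: sum.delta)
  finally show ?thesis using None by simp
qed

definition cols :: "('f option \<times> nat) set" where
  "cols = Sigma UNIV (\<lambda>fo. {..<length (Bstar PF M fo)})"

definition column :: "'f option \<times> nat \<Rightarrow> 'f + 'w \<Rightarrow> real" where
  "column c = Bcol (fst c) (Bstar PF M (fst c) ! snd c)"

lemma finite_cols: "finite cols"
  unfolding cols_def by auto

lemma sum_cols:
  "(\<Sum>c\<in>cols. y c * column c r) = (\<Sum>fo\<in>UNIV. \<Sum>j<length (Bstar PF M fo). y (fo, j) * Bcol fo (Bstar PF M fo ! j) r)"
  unfolding cols_def column_def by (subst sum.Sigma) (auto simp: case_prod_beta)

lemma frac_weight_solution: "(\<Sum>c\<in>cols. frac_weight (fst c) (snd c) * column c r) = 1"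
proof (cases r)
  case (Inl g)
  have "(\<Sum>c\<in>cols. frac_weight (fst c) (snd c) * column c r)
      = (\<Sum>fo\<in>UNIV. if fo = Some g then \<Sum>j<length (Bstar PF M fo). frac_weight fo j else 0)"
    unfolding sum_cols Inl by (intro sum.cong) auto
  then show ?thesis using frac_weight_sum by simp
next
  case (Inr w)
  show ?thesis unfolding sum_cols Inr using frac_weight_combination M_sum by simp
qed

lemma column_nonneg:
  assumes "c \<in> cols"
  shows "0 \<le> column c r"
proof -
  obtain fo j where c: "c = (fo, j)" "j < length (Bstar PF M fo)" using assms by (auto simp: cols_def)
  have "0 \<le> (Bstar PF M fo ! j) w" for w using Bstar_entry_01[OF c(2), of w] by auto
  then show ?thesis using c by (cases r) (simp_all add: column_def)
qed

lemma column_has_one: "c \<in> cols \<Longrightarrow> \<exists>r. column c r = 1"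
proof -
  assume "c \<in> cols"
  then obtain fo j where c: "c = (fo, j)" "j < length (Bstar PF M fo)" by (auto simp: cols_def)
  show ?thesis
  proof (cases fo)
    case None
    then obtain w where "Bstar PF M fo ! j = ind {w}" using Bstar_None_nth[of j] c by metis
    then show ?thesis using c None by (intro exI[of _ "Inr w"]) (simp add: column_def ind_def)
  next
    case (Some f)
    then show ?thesis using c by (intro exI[of _ "Inl f"]) (simp add: column_def)
  qed
qed

lemma Bstar_Some_col:
  "v \<in> set (Bstar PF M (Some f)) \<Longrightarrow> v = (\<lambda>_. 0) \<or> (\<exists>k<length (acc f). 0 < t f ! k \<and> v = ind (acc f ! k))"
  by (auto simp: Bstar_Some set_used split: if_splits)

definition demand_vecs :: "('w \<Rightarrow> real) set" where
  "demand_vecs = (\<lambda>d w. real_of_int (d w)) ` (\<Union>f. demand_type (PF f))"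

lemma ind_used_in_demand_vecs:
  "k < length (acc f) \<Longrightarrow> 0 < t f ! k \<Longrightarrow> ind (acc f ! k) \<in> demand_vecs"
  using indI_used_set_in_demand_type[OF PF_strict M_firm_nonneg]
  unfolding demand_vecs_def ind_eq_of_int_indI_fun by blast

lemma ind_diff_used_in_demand_vecs:
  assumes "a < b" "b < length (acc f)" "0 < t f ! a" "0 < t f ! b"
  shows "ind (acc f ! a) - ind (acc f ! b) \<in> demand_vecs"
proof -
  have "(\<lambda>w. indI (acc f ! a) w - indI (acc f ! b) w) \<in> (\<Union>f. demand_type (PF f))"
    using indI_diff_used_sets_in_demand_type[OF PF_strict M_firm_nonneg assms] by blast
  from imageI[OF this, of "\<lambda>d w. real_of_int (d w)"] show ?thesis
    unfolding demand_vecs_def by (simp add: fun_diff_def ind_eq_of_int_indI)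
qed

lemma Bstar_Some_col_diff:
  assumes v1: "v1 \<in> set (Bstar PF M (Some f))" and v2: "v2 \<in> set (Bstar PF M (Some f))"
  shows "v1 - v2 \<in> demand_vecs \<union> uminus ` demand_vecs \<union> {\<lambda>_. 0}"
proof -
  consider "v1 = (\<lambda>_. 0)" "v2 = (\<lambda>_. 0)"
    | b where "v1 = (\<lambda>_. 0)" "b < length (acc f)" "0 < t f ! b" "v2 = ind (acc f ! b)"
    | a where "a < length (acc f)" "0 < t f ! a" "v1 = ind (acc f ! a)" "v2 = (\<lambda>_. 0)"
    | a b where "a < length (acc f)" "0 < t f ! a" "v1 = ind (acc f ! a)"
        "b < length (acc f)" "0 < t f ! b" "v2 = ind (acc f ! b)"
    using Bstar_Some_col[OF v1] Bstar_Some_col[OF v2] by blast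
  then show ?thesis
  proof cases
    case 1
    then show ?thesis by (simp add: fun_diff_def)
  next
    case (2 b)
    then have "v1 - v2 = - ind (acc f ! b)" by (simp add: fun_eq_iff)
    then show ?thesis using ind_used_in_demand_vecs[OF 2(2,3)] by blast
  next
    case (3 a)
    then show ?thesis using ind_used_in_demand_vecs[OF 3(1,2)] by (simp add: fun_diff_def)
  next
    case (4 a b)
    consider "a = b" | "a < b" | "b < a" by linarith
    then show ?thesis
    proof cases
      case 1
      then show ?thesis using 4 by (simp add: fun_diff_def)
    next
      case 2
      then show ?thesis using 4 ind_diff_used_in_demand_vecs by blast
    next
      case 3
      then have "v1 - v2 = - (ind (acc f ! b) - ind (acc f ! a))" using 4 by (simp add: fun_eq_iff)
      then show ?thesis using ind_diff_used_in_demand_vecs[OF 3 4(1) 4(5,2)] by blast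
    qed
  qed
qed

lemma tu_cols_column:
  assumes tu: "totally_unimodular (\<Union>f. demand_type (PF f))"
  shows "tu_cols column cols"
proof -
  define E where "E = demand_vecs \<union> uminus ` demand_vecs \<union> {\<lambda>_. 0} \<union> range (\<lambda>w. ind {w})"
  have "tu_cols (\<lambda>v. v) E"
    unfolding E_def demand_vecs_def
    by (intro tu_cols_insert_unit_vectors tu_cols_sign_closure totally_unimodular_imp_tu_cols tu)
  moreover have "set (Bstar PF M (Some f)) \<subseteq> E" for f
    using Bstar_Some_col ind_used_in_demand_vecs unfolding E_def by blast
  moreover have "v1 - v2 \<in> E" if "v1 \<in> set (Bstar PF M (Some f))" "v2 \<in> set (Bstar PF M (Some f))" for f v1 v2
    using Bstar_Some_col_diff[OF that] unfolding E_def by blast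
  ultimately have tu_G: "tu_cols (\<lambda>v. v) (stacked_cols (\<lambda>f. set (Bstar PF M (Some f))) E)"
    by (rule tu_cols_stacked_cols)
  have "column ` cols \<subseteq> stacked_cols (\<lambda>f. set (Bstar PF M (Some f))) E"
  proof
    fix v assume "v \<in> column ` cols"
    then obtain fo j where c: "v = Bcol fo (Bstar PF M fo ! j)" "j < length (Bstar PF M fo)"
      by (auto simp: cols_def column_def)
    show "v \<in> stacked_cols (\<lambda>f. set (Bstar PF M (Some f))) E"
    proof (cases fo)
      case None
      then obtain w where "Bstar PF M fo ! j = ind {w}" using Bstar_None_nth[of j] c(2) by metis
      then show ?thesis using c(1) None unfolding E_def stacked_cols_def by blast
    next
      case (Some f)
      then have "v \<in> Bcol (Some f) ` set (Bstar PF M (Some f))" using c by simp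
      then show ?thesis unfolding stacked_cols_def by blast
    qed
  qed
  with tu_G have "tu_cols (\<lambda>v. v) (column ` cols)" by (rule tu_cols_subset)
  then show ?thesis by (rule tu_cols_image)
qed

theorem integral_selection_exists:
  assumes "totally_unimodular (\<Union>f. demand_type (PF f))"
  shows "\<exists>z. (\<forall>fo j. j < length (Bstar PF M fo) \<longrightarrow> z fo j \<in> {0, 1}) \<and>
     (\<forall>r. (\<Sum>fo\<in>UNIV. \<Sum>j<length (Bstar PF M fo). z fo j * Bcol fo (Bstar PF M fo ! j) r) = 1)"
proof -
  obtain z where z: "\<forall>c. z c \<in> \<int> \<and> 0 \<le> z c" "\<forall>c. c \<notin> cols \<longrightarrow> z c = 0"
      "\<forall>r. (\<Sum>c\<in>cols. z c * column c r) = 1"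
    using tu_integral_solution[OF tu_cols_column[OF assms] _ finite_cols,
        of "\<lambda>_. 1" "\<lambda>c. frac_weight (fst c) (snd c)"]
      frac_weight_nonneg frac_weight_beyond frac_weight_solution
    by (force simp: cols_def)
  have "z c \<in> {0, 1}" if c: "c \<in> cols" for c
  proof -
    obtain r where r: "column c r = 1" using column_has_one[OF c] by blast
    have "z c * column c r \<le> (\<Sum>c\<in>cols. z c * column c r)"
      by (rule member_le_sum) (use c z(1) column_nonneg finite_cols in auto)
    then have "z c \<le> 1" using r z(3) by simp
    then show ?thesis using Ints_01 z(1) by blast
  qed
  then show ?thesis using z(3) unfolding sum_cols by (intro exI[of _ "curry z"]) (auto simp: cols_def)
qed

text \<open>By stability the procedure run on f's availability vector under M has the same weights,
  so some worker of \<open>acc f ! j\<close> has no slack left after that step; a worker of a later used set,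
  or one held by a firm it prefers to f, still has slack.\<close>

lemma earlier_set_not_available:
  assumes j: "j < length (acc f)" and mass: "ch_mass (PF f) (M (Some f)) (Suc j) < 1"
    and T: "\<forall>w\<in>T. (\<exists>c. j < c \<and> c < length (acc f) \<and> 0 < t f ! c \<and> w \<in> acc f ! c) \<or>
                  (\<exists>g. g \<noteq> Some f \<and> PW w (Some f) g \<and> 0 < M g w)"
  shows "\<not> acc f ! j \<subseteq> T"
proof
  assume sub: "acc f ! j \<subseteq> T"
  let ?Q = "A_le PW M f" and ?X = "M (Some f)"
  have nonneg: "\<forall>fo w. 0 \<le> M fo w" using M_nonneg by blast
  have "ch_mass (PF f) ?Q (Suc j) < 1" using mass ts_of_A_le by (simp add: ch_mass_def)
  then obtain i where i: "i \<in> acc f ! j" "ch_residual (PF f) ?Q (Suc j) i = 0"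
    using ch_residual_vanishes[OF j] by blast
  have res: "ch_residual (PF f) ?Q (Suc j) i = ch_residual (PF f) ?X (Suc j) i + (?Q i - ?X i)"
    using ch_residual_eq_if_prefix_eq(2)[of "Suc j" "PF f" ?Q ?X] ts_of_A_le by simp
  have "0 \<le> ch_residual (PF f) ?X (Suc j) i" using ch_residual_nonneg[OF M_firm_nonneg] j by simp
  moreover have "?X i \<le> ?Q i" using A_le_ge_own[OF nonneg] .
  moreover have "0 < ch_residual (PF f) ?X (Suc j) i \<or> ?X i < ?Q i"
    using T sub i(1)
  proof (elim ballE disjE exE conjE)
    fix c assume c: "j < c" "c < length (acc f)" "0 < t f ! c" "i \<in> acc f ! c"
    have "0 < ch_residual (PF f) ?X c i" using ch_residual_pos[OF M_firm_nonneg c(2-4)] .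
    also have "\<dots> \<le> ch_residual (PF f) ?X (Suc j) i" using ch_residual_antimono[OF M_firm_nonneg] c by simp
    finally show ?thesis ..
  next
    fix g assume g: "g \<noteq> Some f" "PW i (Some f) g" "0 < M g i"
    then have "?X i + M g i \<le> ?Q i" by (intro A_le_ge_preferred[OF nonneg])
    then show ?thesis using g(3) by (intro disjI2) linarith
  qed auto
  ultimately show False using i(2) res by linarith
qed

end

section \<open>The selected integral matching\<close>

lemma sum_01_eq_1:
  assumes "finite S" "\<forall>j\<in>S. a j \<in> {0, 1 :: real}" "(\<Sum>j\<in>S. a j) = 1"
  obtains j0 where "j0 \<in> S" "\<forall>j\<in>S. a j = (if j = j0 then 1 else 0)"
proof -
  obtain j0 where j0: "j0 \<in> S" "a j0 \<noteq> 0" using assms(3) by (metis sum.neutral zero_neq_one)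
  have "a j = 0" if "j \<in> S" "j \<noteq> j0" for j
  proof (rule ccontr)
    assume "a j \<noteq> 0"
    then have "(\<Sum>i\<in>{j0, j}. a i) \<le> (\<Sum>i\<in>S. a i)"
      by (intro sum_mono2) (use assms that j0 in auto)
    moreover have "a j = 1" "a j0 = 1" using assms(2) that(1) j0 \<open>a j \<noteq> 0\<close> by auto
    ultimately show False using assms(3) that(2) by simp
  qed
  then show ?thesis using that j0 assms(2) by auto
qed

locale integral_selection = stable_market PW PF M
  for PW :: "'w::{finite,linorder} \<Rightarrow> 'f::finite option \<Rightarrow> 'f option \<Rightarrow> bool"
    and PF :: "'f \<Rightarrow> 'w set \<Rightarrow> 'w set \<Rightarrow> bool"
    and M :: "'f option \<Rightarrow> 'w \<Rightarrow> real" +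
  fixes z :: "'f option \<Rightarrow> nat \<Rightarrow> real"
  assumes z_01: "j < length (Bstar PF M fo) \<Longrightarrow> z fo j \<in> {0, 1}"
    and z_sum: "(\<Sum>fo\<in>UNIV. \<Sum>j<length (Bstar PF M fo). z fo j * Bcol fo (Bstar PF M fo ! j) r) = 1"
begin

definition M_int :: "'f option \<Rightarrow> 'w \<Rightarrow> real" where
  "M_int fo w = (\<Sum>j<length (Bstar PF M fo). z fo j * (Bstar PF M fo ! j) w)"

lemma M_int_term_01: "j < length (Bstar PF M fo) \<Longrightarrow> z fo j * (Bstar PF M fo ! j) w \<in> {0, 1}"
  using z_01 Bstar_entry_01 by fastforce

lemma M_int_nonneg: "0 \<le> M_int fo w"
  unfolding M_int_def
proof (rule sum_nonneg)
  fix j assume "j \<in> {..<length (Bstar PF M fo)}"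
  then have "z fo j * (Bstar PF M fo ! j) w \<in> {0, 1}" using M_int_term_01 by simp
  then show "0 \<le> z fo j * (Bstar PF M fo ! j) w" by auto
qed

lemma M_int_sum: "(\<Sum>fo\<in>UNIV. M_int fo w) = 1"
  using z_sum[of "Inr w"] by (simp add: M_int_def)

lemma M_int_01: "M_int fo w \<in> {0, 1}"
proof (rule Ints_01)
  show "M_int fo w \<in> \<int>"
    unfolding M_int_def
  proof (rule Ints_sum)
    fix j assume "j \<in> {..<length (Bstar PF M fo)}"
    then have "z fo j * (Bstar PF M fo ! j) w \<in> {0, 1}" using M_int_term_01 by simp
    then show "z fo j * (Bstar PF M fo ! j) w \<in> \<int>" by auto
  qed
  have "M_int fo w \<le> (\<Sum>fo\<in>UNIV. M_int fo w)" by (rule member_le_sum) (auto intro: M_int_nonneg)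
  then show "M_int fo w \<le> 1" using M_int_sum by simp
qed (rule M_int_nonneg)

lemma is_matching_M_int: "is_matching M_int"
proof -
  have "M_int fo w \<le> 1" for fo w using M_int_01[of fo w] by auto
  then show ?thesis unfolding is_matching_def is_pseudo_def using M_int_nonneg M_int_sum by blast
qed

lemma integral_M_int: "integral M_int"
  using M_int_01 by (simp add: integral_def)

lemma M_int_support: "M_int fo w \<noteq> 0 \<Longrightarrow> 0 < M fo w"
  unfolding M_int_def
  by (erule sum.not_neutral_contains_not_neutral) (auto intro: Bstar_entry_support)

lemma M_int_firm_column: "\<exists>j<length (Bstar PF M (Some f)). M_int (Some f) = Bstar PF M (Some f) ! j"
proof -
  have "(\<Sum>fo\<in>UNIV. \<Sum>j<length (Bstar PF M fo). z fo j * Bcol fo (Bstar PF M fo ! j) (Inl f))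
      = (\<Sum>fo\<in>UNIV. if fo = Some f then \<Sum>j<length (Bstar PF M fo). z fo j else 0)"
    by (rule sum.cong) auto
  then have "(\<Sum>j<length (Bstar PF M (Some f)). z (Some f) j) = 1" using z_sum[of "Inl f"] by simp
  then obtain j0 where j0: "j0 \<in> {..<length (Bstar PF M (Some f))}"
      "\<forall>j\<in>{..<length (Bstar PF M (Some f))}. z (Some f) j = (if j = j0 then 1 else 0)"
    using sum_01_eq_1[of "{..<length (Bstar PF M (Some f))}" "z (Some f)"] z_01 by blast
  have "M_int (Some f) w = (\<Sum>j<length (Bstar PF M (Some f)). if j = j0 then (Bstar PF M (Some f) ! j) w else 0)" for w
    unfolding M_int_def using j0(2) by (intro sum.cong) auto
  then have "M_int (Some f) w = (Bstar PF M (Some f) ! j0) w" for w using j0(1) by simp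
  then show ?thesis using j0(1) by auto
qed

lemma M_int_firm_cases:
  obtains k where "k < length (acc f)" "0 < t f ! k" "M_int (Some f) = ind (acc f ! k)"
    | "M_int (Some f) = (\<lambda>_. 0)" "sum_list (t f) < 1"
proof -
  obtain j where j: "j < length (Bstar PF M (Some f))" "M_int (Some f) = Bstar PF M (Some f) ! j"
    using M_int_firm_column by blast
  from j(1) show ?thesis
  proof (cases rule: Bstar_Some_nth)
    case 1
    then show ?thesis using that(1) nth_used j(2) by auto
  next
    case 2
    then show ?thesis using that(2) j(2) sum_list_ts_of_le_1[OF M_firm_nonneg[of f], of "PF f"] by simp
  qed
qed

definition avail :: "'f \<Rightarrow> 'w set" where
  "avail f = {w. \<exists>g. M_int g w = 1 \<and> (PW w (Some f) g \<or> g = Some f)}"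

lemma A_le_M_int: "A_le PW M_int f = ind (avail f)"
proof
  fix w
  have nonneg: "\<forall>fo w. 0 \<le> M_int fo w" using M_int_nonneg by blast
  have "A_le PW M_int f w \<in> {0, 1}"
  proof (rule Ints_01)
    show "A_le PW M_int f w \<in> \<int>"
      unfolding A_le_def
    proof (rule Ints_sum)
      fix g show "M_int g w \<in> \<int>" using M_int_01[of g w] by auto
    qed
    have "A_le PW M_int f w \<le> (\<Sum>fo\<in>UNIV. M_int fo w)"
      unfolding A_le_def by (rule sum_mono2) (auto intro: M_int_nonneg)
    then show "A_le PW M_int f w \<le> 1" using M_int_sum by simp
  qed (rule A_le_nonneg[OF nonneg])
  moreover have "w \<in> avail f" if "A_le PW M_int f w = 1"
  proof -
    obtain g where "g \<in> {g. PW w (Some f) g \<or> g = Some f}" "M_int g w \<noteq> 0"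
      using \<open>A_le PW M_int f w = 1\<close> unfolding A_le_def
      by (metis (no_types, lifting) sum.neutral zero_neq_one)
    then show ?thesis using M_int_01 by (fastforce simp: avail_def)
  qed
  moreover have "1 \<le> A_le PW M_int f w" if w: "w \<in> avail f"
  proof -
    obtain g where "M_int g w = 1" "PW w (Some f) g \<or> g = Some f" using w by (auto simp: avail_def)
    then show ?thesis
      unfolding A_le_def using member_le_sum[of g _ "\<lambda>g. M_int g w"] M_int_nonneg by fastforce
  qed
  ultimately show "A_le PW M_int f w = ind (avail f) w" by (auto simp: ind_def)
qed

lemma avail_cases:
  "w \<in> avail f \<Longrightarrow> M_int (Some f) w = 1 \<or> (\<exists>g. g \<noteq> Some f \<and> PW w (Some f) g \<and> 0 < M g w)"
  using M_int_support by (fastforce simp: avail_def)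

lemma chhat_A_le_M_int: "chhat (PF f) (A_le PW M_int f) = M_int (Some f)"
proof (cases rule: M_int_firm_cases[of f])
  case (1 k)
  have "acc f ! k \<subseteq> avail f"
  proof
    fix w assume "w \<in> acc f ! k"
    then have "M_int (Some f) w = 1" using 1(3) by (simp add: ind_def)
    then show "w \<in> avail f" by (auto simp: avail_def)
  qed
  moreover have "\<not> acc f ! j \<subseteq> avail f" if "j < k" for j
  proof (rule earlier_set_not_available)
    show "j < length (acc f)" using that 1(1) by simp
    show "ch_mass (PF f) (M (Some f)) (Suc j) < 1"
      using ch_mass_lt_1_before_used[OF M_firm_nonneg 1(1,2)] that by simp
    show "\<forall>w\<in>avail f. (\<exists>c. j < c \<and> c < length (acc f) \<and> 0 < t f ! c \<and> w \<in> acc f ! c) \<or>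
        (\<exists>g. g \<noteq> Some f \<and> PW w (Some f) g \<and> 0 < M g w)"
      using avail_cases 1 that by (fastforce simp: ind_def split: if_splits)
  qed
  ultimately show ?thesis using chhat_ind_first[OF PF_strict 1(1)] 1(3) by (simp add: A_le_M_int)
next
  case 2
  have "\<not> acc f ! j \<subseteq> avail f" if "j < length (acc f)" for j
  proof (rule earlier_set_not_available[OF that])
    have "ch_mass (PF f) (M (Some f)) (Suc j) \<le> sum_list (t f)"
      using ch_mass_mono[OF M_firm_nonneg[of f], of "Suc j" "length (acc f)" "PF f"] that
        sum_list_ts_of[of "PF f" "M (Some f)"]
      by simp
    then show "ch_mass (PF f) (M (Some f)) (Suc j) < 1" using 2(2) by simp
    show "\<forall>w\<in>avail f. (\<exists>c. j < c \<and> c < length (acc f) \<and> 0 < t f ! c \<and> w \<in> acc f ! c) \<or>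
        (\<exists>g. g \<noteq> Some f \<and> PW w (Some f) g \<and> 0 < M g w)"
      using avail_cases 2(1) by fastforce
  qed
  then show ?thesis using chhat_ind_none[OF PF_strict] 2(1) by (simp add: A_le_M_int)
qed

theorem stable_M_int: "stable PW PF M_int"
proof -
  have "M_int (Some f) w = 0" if "PW w None (Some f)" for f w
    using M_int_support M_unacceptable[OF that] by fastforce
  then show ?thesis
    using stable_iff_chhat_A_le M_int_nonneg chhat_A_le_M_int by blast
qed

end

theorem lemma6:
  fixes PW :: "'w::{finite,linorder} \<Rightarrow> 'f::finite option \<Rightarrow> 'f option \<Rightarrow> bool"
    and PF :: "'f \<Rightarrow> 'w set \<Rightarrow> 'w set \<Rightarrow> bool"
    and M :: "'f option \<Rightarrow> 'w \<Rightarrow> real"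
  assumes "\<forall>w. strict_total (PW w)"
    and "\<forall>f. strict_total (PF f)"
    and "is_matching M"
    and "stable PW PF M"
    and "totally_unimodular (\<Union>f. demand_type (PF f))"
  shows "\<exists>z :: 'f option \<Rightarrow> nat \<Rightarrow> real.
     (\<forall>fo j. j < length (Bstar PF M fo) \<longrightarrow> z fo j \<in> {0, 1}) \<and>
     (\<forall>r. (\<Sum>fo\<in>UNIV. \<Sum>j<length (Bstar PF M fo). z fo j * Bcol fo (Bstar PF M fo ! j) r) = 1) \<and>
     (let M' = (\<lambda>fo w. \<Sum>j<length (Bstar PF M fo). z fo j * (Bstar PF M fo ! j) w)
      in is_matching M' \<and> integral M' \<and> stable PW PF M')"
proof -
  \<comment> \<open>The workers' preferences need not be strict orders for this argument.\<close>
  interpret stable_market PW PF M using assms(2-4) by unfold_locales auto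
  obtain z where z_01: "\<forall>fo j. j < length (Bstar PF M fo) \<longrightarrow> z fo j \<in> {0, 1}"
    and z_sum: "\<forall>r. (\<Sum>fo\<in>UNIV. \<Sum>j<length (Bstar PF M fo). z fo j * Bcol fo (Bstar PF M fo ! j) r) = 1"
    using integral_selection_exists[OF assms(5)] by blast
  interpret integral_selection PW PF M z using z_01 z_sum by unfold_locales auto
  have "(\<lambda>fo w. \<Sum>j<length (Bstar PF M fo). z fo j * (Bstar PF M fo ! j) w) = M_int"
    by (simp add: fun_eq_iff M_int_def)
  then show ?thesis
    using z_01 z_sum is_matching_M_int integral_M_int stable_M_int
    by (intro exI[of _ z]) (simp add: Let_def)
qed

end
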